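(* Let $n\ge1$ and $1<p<\infty$. Then $SR_{p,p}(\mathbb{R}^n)=L^p(\mathbb{R}^n)$.
   Context: $\mathcal{D}(\mathbb{R}^n)=\{2^{-k}(m+[0,1)^n):k\in\mathbb{Z},m\in\mathbb{Z}^n\}$. A countable $(Q_i)_{i\in I}\subset\mathcal{D}(\mathbb{R}^n)$ is sparse if there exist pairwise disjoint measurable $E_{Q_i}\subseteq Q_i$ with $|E_{Q_i}|\ge\frac12|Q_i|$; $S(\mathbb{R}^n)$ is the set of sparse families. $SR_{p,p}(\mathbb{R}^n)$ is the set of $f\in L^1_{\mathrm{loc}}(\mathbb{R}^n)$ with $\|f\|_{SR_{p,p}}=\sup_{(Q_i)\in S(\mathbb{R}^n)}\big\{\sum_i\big(|Q_i|^{-1/p'}\int_{Q_i}|f|\big)^p\big\}^{1/p}<\infty$, $p'$ the dual exponent. *)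

theory Defs
  imports "HOL-Analysis.Analysis"
begin

definition dyadic_cube :: "int \<Rightarrow> ('n::finite \<Rightarrow> int) \<Rightarrow> (real^'n) set" where
  "dyadic_cube k m = {x. \<forall>i. 2 powr (- real_of_int k) * real_of_int (m i) \<le> x $ i
                          \<and> x $ i < 2 powr (- real_of_int k) * (real_of_int (m i) + 1)}"

definition dyadic_cubes :: "(real^'n::finite) set set" where
  "dyadic_cubes = {dyadic_cube k m | k m. True}"

text \<open>A countable family (Q i)_{i in I} of dyadic cubes (countable index sets are
  represented as subsets of nat) is sparse.\<close>
definition sparse :: "(nat \<Rightarrow> (real^'n::finite) set) \<Rightarrow> nat set \<Rightarrow> bool" where
  "sparse Q I \<longleftrightarrow> (\<forall>i\<in>I. Q i \<in> dyadic_cubes) \<and>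
     (\<exists>E. disjoint_family_on E I \<and>
        (\<forall>i\<in>I. E i \<in> sets lebesgue \<and> E i \<subseteq> Q i \<and>
                 measure lebesgue (E i) \<ge> 1/2 * measure lebesgue (Q i)))"

definition loc_integrable :: "(real^'n::finite \<Rightarrow> real) \<Rightarrow> bool" where
  "loc_integrable f \<longleftrightarrow> (\<forall>K. compact K \<longrightarrow> set_integrable lebesgue K f)"

definition dual_exp :: "real \<Rightarrow> real" where
  "dual_exp p = p / (p - 1)"

definition sr_sum :: "real \<Rightarrow> (real^'n::finite \<Rightarrow> real) \<Rightarrow> (nat \<Rightarrow> (real^'n) set) \<Rightarrow> nat set \<Rightarrow> ennreal" where
  "sr_sum p f Q I = (\<Sum>i. if i \<in> I then
       ennreal ((measure lebesgue (Q i) powr (- 1 / dual_exp p)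
                 * (LINT x:Q i|lebesgue. \<bar>f x\<bar>)) powr p) else 0)"

text \<open>The SR_{p,p} norm raised to the p-th power (finite iff the norm is finite).\<close>
definition sr_norm_p :: "real \<Rightarrow> (real^'n::finite \<Rightarrow> real) \<Rightarrow> ennreal" where
  "sr_norm_p p f = (SUP (Q, I) \<in> {(Q, I). sparse Q I}. sr_sum p f Q I)"

definition SR_pp :: "real \<Rightarrow> (real^'n::finite \<Rightarrow> real) set" where
  "SR_pp p = {f. loc_integrable f \<and> sr_norm_p p f < \<infinity>}"

definition Lp :: "real \<Rightarrow> (real^'n::finite \<Rightarrow> real) set" where
  "Lp p = {f. f \<in> borel_measurable lebesgue \<and> integrable lebesgue (\<lambda>x. \<bar>f x\<bar> powr p)}"

end

theory Submission
  imports Defs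
begin

text \<open>
  Let \<open>a\<^sub>i\<close> be the average of \<open>|f|\<close> over \<open>Q\<^sub>i\<close>. For \<open>f \<in> L\<^sup>p\<close>, a sparse sum
  \<open>\<Sum>\<^sub>i |Q\<^sub>i| a\<^sub>i\<^sup>p\<close> is at most \<open>2 \<Sum>\<^sub>i |E\<^sub>i| a\<^sub>i\<^sup>p \<le> 2 \<integral> M\<^sup>p\<close>, where \<open>M\<close> is the maximal
  function of the finitely many cubes involved. Since maximal dyadic cubes are disjoint, \<open>M\<close>
  satisfies the weak-type estimate \<open>v |{M \<ge> v}| \<le> \<integral>\<^bsub>{M \<ge> v}\<^esub> |f|\<close>, and a layer-cake
  summation over the finitely many values of \<open>M\<close> turns this into \<open>\<integral> M\<^sup>p \<le> C\<^sub>p \<integral> |f|\<^sup>p\<close>.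

  Conversely, the cubes of one dyadic generation form a sparse family, and the corresponding
  sparse sum dominates \<open>\<integral> (E\<^sub>k g)\<^sup>p\<close> for the dyadic expectation \<open>E\<^sub>k g\<close> of any \<open>0 \<le> g \<le> |f|\<close>.
  For bounded compactly supported \<open>g\<close>, \<open>E\<^sub>k g \<rightarrow> g\<close> in \<open>L\<^sup>1\<close> (first for indicators of
  open sets, then of measurable sets, then for step functions), so the convexity bound
  \<open>g\<^sup>p \<le> (E\<^sub>k g)\<^sup>p + p N\<^bsup>p-1\<^esup> |g - E\<^sub>k g|\<close> bounds \<open>\<integral> g\<^sup>p\<close> by the sparse norm.
  Monotone convergence over truncations of \<open>|f|\<close> concludes.
\<close>

section \<open>Dyadic cubes\<close>

definition dyadic_index :: "int \<Rightarrow> real^'n::finite \<Rightarrow> ('n \<Rightarrow> int)" where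
  "dyadic_index k x = (\<lambda>i. \<lfloor>2 powr k * x $ i\<rfloor>)"

definition dyadic_corner :: "int \<Rightarrow> ('n::finite \<Rightarrow> int) \<Rightarrow> real^'n" where
  "dyadic_corner k m = (\<chi> i. 2 powr (- real_of_int k) * real_of_int (m i))"

lemma mem_dyadic_cube_iff: "x \<in> dyadic_cube k m \<longleftrightarrow> dyadic_index k x = m"
proof -
  have "(2 powr (- real_of_int k) * real_of_int (m i) \<le> x $ i
          \<and> x $ i < 2 powr (- real_of_int k) * (real_of_int (m i) + 1)) \<longleftrightarrow>
        \<lfloor>2 powr k * x $ i\<rfloor> = m i" for i
    by (simp add: powr_minus_divide floor_eq_iff field_simps)
  then show ?thesis
    unfolding dyadic_cube_def dyadic_index_def by (auto simp: fun_eq_iff)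
qed

lemma mem_dyadic_cube_index: "x \<in> dyadic_cube k (dyadic_index k x)"
  by (simp add: mem_dyadic_cube_iff)

lemma dyadic_cube_disjoint: "m \<noteq> m' \<Longrightarrow> dyadic_cube k m \<inter> dyadic_cube k m' = {}"
  by (auto simp: mem_dyadic_cube_iff)

lemma box_subset_dyadic_cube:
  "box (dyadic_corner k m) (dyadic_corner k (\<lambda>i. m i + 1)) \<subseteq> dyadic_cube k m"
  by (auto simp: mem_box_cart dyadic_corner_def dyadic_cube_def less_imp_le)

lemma dyadic_cube_subset_cbox:
  "dyadic_cube k m \<subseteq> cbox (dyadic_corner k m) (dyadic_corner k (\<lambda>i. m i + 1))"
  by (auto simp: mem_box_cart dyadic_corner_def dyadic_cube_def less_imp_le)

lemma dyadic_cube_borel: "dyadic_cube k (m::'n::finite \<Rightarrow> int) \<in> sets borel"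
proof -
  have "dyadic_cube k m =
      (\<Inter>i. {x::real^'n. 2 powr (- real_of_int k) * real_of_int (m i) \<le> x $ i}
            \<inter> {x. x $ i < 2 powr (- real_of_int k) * (real_of_int (m i) + 1)})"
    by (auto simp: dyadic_cube_def)
  also have "\<dots> \<in> sets borel"
    by (intro sets.countable_INT' borel_closed borel_open sets.Int)
       (auto intro!: closed_Collect_le open_Collect_less continuous_intros)
  finally show ?thesis .
qed

lemma dyadic_cube_lebesgue: "dyadic_cube k m \<in> sets lebesgue"
  by (rule sets_completionI_sets) (simp add: dyadic_cube_borel)

lemma dyadic_cube_lmeasurable: "dyadic_cube k m \<in> lmeasurable"
  by (rule fmeasurableI2[OF lmeasurable_cbox dyadic_cube_subset_cbox dyadic_cube_lebesgue])

lemma measure_dyadic_cube: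
  "measure lebesgue (dyadic_cube k (m::'n::finite \<Rightarrow> int)) = (2 powr (- real_of_int k)) ^ CARD('n)"
proof -
  let ?a = "dyadic_corner k m" and ?b = "dyadic_corner k (\<lambda>i. m i + 1)"
  have "measure lebesgue (dyadic_cube k m) = measure lebesgue (cbox ?a ?b)"
  proof (rule measure_negligible_symdiff)
    show "negligible (sym_diff (cbox ?a ?b) (dyadic_cube k m))"
      by (rule negligible_subset[OF negligible_frontier_interval[of ?a ?b]])
         (use box_subset_dyadic_cube[of k m] dyadic_cube_subset_cbox[of k m] in blast)
  qed simp
  also have "\<dots> = (\<Prod>i\<in>UNIV. ?b $ i - ?a $ i)"
  proof -
    have "?a \<in> cbox ?a ?b" by (simp add: mem_box_cart dyadic_corner_def)
    then have "cbox ?a ?b \<noteq> {}" by blast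
    then show ?thesis by (simp add: content_cbox_cart)
  qed
  also have "\<dots> = (\<Prod>i\<in>(UNIV::'n set). 2 powr (- real_of_int k))"
    by (simp add: dyadic_corner_def algebra_simps)
  finally show ?thesis by simp
qed

lemma measure_dyadic_cube_pos: "0 < measure lebesgue (dyadic_cube k m)"
  by (simp add: measure_dyadic_cube)

lemma dyadic_cubes_lmeasurable: "Q \<in> dyadic_cubes \<Longrightarrow> Q \<in> lmeasurable"
  unfolding dyadic_cubes_def using dyadic_cube_lmeasurable by auto

lemma measure_dyadic_cubes_pos: "Q \<in> dyadic_cubes \<Longrightarrow> 0 < measure lebesgue Q"
  unfolding dyadic_cubes_def using measure_dyadic_cube_pos by auto

lemma dyadic_index_coarsen:
  assumes "k \<le> k'"
  shows "dyadic_index k x = (\<lambda>i. dyadic_index k' x i div 2 ^ nat (k' - k))"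
proof
  fix i
  have e: "real_of_int (2 ^ nat (k' - k)) = 2 powr (real_of_int k' - real_of_int k)"
    using assms powr_realpow[of 2 "nat (k' - k)"] by simp
  have "2 powr real_of_int k * x $ i = (2 powr real_of_int k' * x $ i) / real_of_int (2 ^ nat (k' - k))"
    by (simp only: e powr_diff) simp
  moreover have "\<lfloor>(2 powr k' * x $ i) / real_of_int (2 ^ nat (k' - k))\<rfloor>
      = \<lfloor>2 powr k' * x $ i\<rfloor> div 2 ^ nat (k' - k)"
    by (rule floor_divide_real_eq_div) simp
  ultimately show "dyadic_index k x i = dyadic_index k' x i div 2 ^ nat (k' - k)"
    unfolding dyadic_index_def by simp
qed

lemma dyadic_cube_nested_or_disjoint:
  assumes "k \<le> k'"
  shows "dyadic_cube k' m' \<subseteq> dyadic_cube k m \<or> dyadic_cube k' m' \<inter> dyadic_cube k m = {}"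
proof (cases "dyadic_cube k' m' \<inter> dyadic_cube k m = {}")
  case False
  then obtain x where "x \<in> dyadic_cube k' m'" "x \<in> dyadic_cube k m" by blast
  then have "dyadic_index k' x = m'" "dyadic_index k x = m" by (simp_all add: mem_dyadic_cube_iff)
  then have "dyadic_index k y = m" if "dyadic_index k' y = m'" for y
    using that dyadic_index_coarsen[OF assms, of y] dyadic_index_coarsen[OF assms, of x] by simp
  then show ?thesis by (auto simp: mem_dyadic_cube_iff)
qed simp

lemma dyadic_cubes_nested_or_disjoint:
  assumes "Q \<in> dyadic_cubes" "Q' \<in> dyadic_cubes"
  shows "Q \<subseteq> Q' \<or> Q' \<subseteq> Q \<or> Q \<inter> Q' = {}"
proof -
  obtain k m k' m' where "Q = dyadic_cube k m" "Q' = dyadic_cube k' m'"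
    using assms unfolding dyadic_cubes_def by auto
  then show ?thesis
    using dyadic_cube_nested_or_disjoint[of k k' m' m] dyadic_cube_nested_or_disjoint[of k' k m m']
    by (cases "k \<le> k'") auto
qed

lemma dyadic_cube_component_dist:
  assumes "x \<in> dyadic_cube k m" "y \<in> dyadic_cube k m"
  shows "\<bar>x $ i - y $ i\<bar> < 2 powr (- real_of_int k)"
proof -
  let ?s = "2 powr (- real_of_int k)"
  have "?s * m i \<le> x $ i" "x $ i < ?s * m i + ?s" "?s * m i \<le> y $ i" "y $ i < ?s * m i + ?s"
    using assms unfolding dyadic_cube_def by (auto simp: algebra_simps)
  then show ?thesis by (simp add: abs_less_iff)
qed

lemma young_powr:
  fixes p u v :: real
  assumes p: "1 < p" and u: "0 \<le> u" and v: "0 \<le> v"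
  shows "p * (v * u powr (p - 1)) \<le> v powr p + (p - 1) * u powr p"
proof (cases "u = 0 \<or> v = 0")
  case True then show ?thesis using p u v by auto
next
  case False
  then have u0: "0 < u" and v0: "0 < v" using u v by auto
  have "(v powr p) powr (1/p) * (u powr p) powr ((p-1)/p) \<le> (1/p) * v powr p + ((p-1)/p) * u powr p"
    using p u0 v0 by (intro Youngs_inequality_0) (auto simp: field_simps)
  moreover have "(v powr p) powr (1/p) = v" using p v0 by (simp add: powr_powr)
  moreover have "(u powr p) powr ((p-1)/p) = u powr (p - 1)" using p u0 by (simp add: powr_powr)
  ultimately have "v * u powr (p - 1) \<le> (1/p) * v powr p + ((p-1)/p) * u powr p" by simp
  then show ?thesis using p by (simp add: field_simps)
qed

lemma powr_tangent_le:
  fixes p u v :: real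
  assumes p: "1 < p" and u: "0 \<le> u" and v: "0 \<le> v"
  shows "u powr p \<le> v powr p + p * u powr (p - 1) * (u - v)"
proof -
  have "u * u powr (p - 1) = u powr p"
    using u p by (cases "u = 0") (simp_all add: powr_mult_base)
  then show ?thesis using young_powr[OF p u v] by (simp add: algebra_simps)
qed

lemma powr_diff_le_powr_pred_diff:
  fixes p u v :: real
  assumes p: "1 < p" and u: "0 \<le> u" and uv: "u < v"
  shows "v powr p - u powr p \<le> p / (p - 1) * v * (v powr (p - 1) - u powr (p - 1))"
proof -
  have v: "0 < v" using u uv by simp
  have "v * v powr (p - 1) = v powr p" using v by (simp add: powr_mult_base)
  then have "(p - 1) * (v powr p - u powr p) \<le> p * v * (v powr (p - 1) - u powr (p - 1))"
    using young_powr[OF p u less_imp_le[OF v]] by (simp add: algebra_simps)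
  then show ?thesis using p by (simp add: field_simps)
qed

lemma mult_powr_pred_le_absorb:
  fixes p q g m :: real
  assumes p: "1 < p" and q: "0 < q" and g: "0 \<le> g" and m: "0 \<le> m"
  shows "q * g * m powr (p - 1) \<le> m powr p / 4 + q * (4 * q) powr (p - 1) * g powr p"
proof (cases "m \<le> 4 * q * g")
  case True
  have "m powr (p - 1) \<le> (4 * q * g) powr (p - 1)"
    using True m p by (intro powr_mono2) auto
  also have "\<dots> = (4 * q) powr (p - 1) * g powr (p - 1)"
    using q g by (simp add: powr_mult)
  finally have "q * g * m powr (p - 1) \<le> q * (4 * q) powr (p - 1) * (g * g powr (p - 1))"
    using q g by (simp add: mult_left_mono algebra_simps)
  also have "g * g powr (p - 1) = g powr p"
    using g p by (cases "g = 0") (simp_all add: powr_mult_base)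
  finally show ?thesis by (simp add: add_increasing)
next
  case False
  moreover have "0 \<le> 4 * q * g" using q g by simp
  ultimately have m0: "0 < m" by linarith
  have "q * g * m powr (p - 1) \<le> m / 4 * m powr (p - 1)"
    using False by (intro mult_right_mono) auto
  also have "\<dots> = m powr p / 4"
    using m0 by (simp add: powr_mult_base)
  finally show ?thesis using q g by (simp add: add_increasing2)
qed

definition pred_below :: "real set \<Rightarrow> real \<Rightarrow> real" where
  "pred_below V v = Max (insert 0 {w\<in>V. w < v})"

lemma pred_below_bounds:
  assumes "finite V" "0 < v"
  shows "pred_below V v \<in> insert 0 V" "pred_below V v < v" "0 \<le> pred_below V v"
    "\<And>w. w \<in> V \<Longrightarrow> w < v \<Longrightarrow> w \<le> pred_below V v"
proof -
  have fin: "finite (insert 0 {w\<in>V. w < v})" using assms(1) by simp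
  have "pred_below V v \<in> insert 0 {w\<in>V. w < v}"
    unfolding pred_below_def by (rule Max_in[OF fin]) simp
  then show "pred_below V v \<in> insert 0 V" "pred_below V v < v" using assms(2) by auto
  show "0 \<le> pred_below V v" "\<And>w. w \<in> V \<Longrightarrow> w < v \<Longrightarrow> w \<le> pred_below V v"
    unfolding pred_below_def using fin by (auto simp: Max_ge_iff)
qed

lemma sum_pred_below_telescope:
  fixes V :: "real set" and h :: "real \<Rightarrow> real"
  assumes fin: "finite V" and pos: "\<forall>v\<in>V. 0 < v" and h0: "h 0 = 0" and m: "m \<in> insert 0 V"
  shows "(\<Sum>v\<in>{v\<in>V. v \<le> m}. h v - h (pred_below V v)) = h m"
  using m
proof (induction "card {v\<in>V. v \<le> m}" arbitrary: m rule: less_induct)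
  case less
  show ?case
  proof (cases "m = 0")
    case True
    then have "{v\<in>V. v \<le> m} = {}" using pos by force
    then show ?thesis using True h0 by (simp only: sum.empty)
  next
    case False
    then have mV: "m \<in> V" and mpos: "0 < m" using less.prems pos by auto
    let ?m' = "pred_below V m"
    note P = pred_below_bounds[OF fin mpos]
    have eq: "{v\<in>V. v \<le> m} = insert m {v\<in>V. v \<le> ?m'}"
      using P mV by (auto simp: less_le)
    have nm: "m \<notin> {v\<in>V. v \<le> ?m'}" using P by auto
    have fin': "finite {v\<in>V. v \<le> ?m'}" using fin by simp
    then have "card {v\<in>V. v \<le> ?m'} < card {v\<in>V. v \<le> m}"
      unfolding eq using nm by simp
    then have "(\<Sum>v\<in>{v\<in>V. v \<le> ?m'}. h v - h (pred_below V v)) = h ?m'"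
      using less.hyps P(1) by blast
    then show ?thesis unfolding eq using nm fin' by simp
  qed
qed

lemma tendsto_zero_nonneg_iff_eventually_less:
  fixes X :: "nat \<Rightarrow> real"
  assumes "\<And>n. 0 \<le> X n"
  shows "X \<longlonglongrightarrow> 0 \<longleftrightarrow> (\<forall>\<epsilon>>0. eventually (\<lambda>n. X n < \<epsilon>) sequentially)"
proof
  assume "\<forall>\<epsilon>>0. eventually (\<lambda>n. X n < \<epsilon>) sequentially"
  then show "X \<longlonglongrightarrow> 0"
    using assms by (intro order_tendstoI) (auto intro: always_eventually less_le_trans)
qed (auto dest: order_tendstoD(2))

lemma floor_quantize:
  fixes y N :: real and L :: nat
  assumes y: "\<bar>y\<bar> \<le> N" and N: "0 < N" and L: "0 < L"
  shows "\<lfloor>y * L / N\<rfloor> \<in> {- int L..int L}" "\<bar>y - \<lfloor>y * L / N\<rfloor> * N / L\<bar> \<le> N / L"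
proof -
  let ?t = "y * L / N"
  have "\<bar>?t\<bar> \<le> L"
    using y N L by (simp add: abs_mult abs_div divide_le_eq mult.commute mult_right_mono)
  then have "- real L \<le> ?t" "?t \<le> real L" unfolding abs_le_iff by linarith+
  then show "\<lfloor>?t\<rfloor> \<in> {- int L..int L}"
    by (metis atLeastAtMost_iff floor_mono floor_of_int of_int_minus of_int_of_nat_eq)
  have d: "0 \<le> ?t - \<lfloor>?t\<rfloor>" "?t - \<lfloor>?t\<rfloor> \<le> 1" by linarith+
  have NL: "0 \<le> N / L" using N L by simp
  have "y - \<lfloor>?t\<rfloor> * N / L = (?t - \<lfloor>?t\<rfloor>) * (N / L)"
    using N L by (simp add: field_simps)
  also have "\<bar>\<dots>\<bar> \<le> N / L"
    using mult_left_le_one_le[OF NL d] mult_nonneg_nonneg[OF d(1) NL] by simp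
  finally show "\<bar>y - \<lfloor>?t\<rfloor> * N / L\<bar> \<le> N / L" .
qed

section \<open>Integrability and averages\<close>

lemma Lp_set_integrable:
  fixes g :: "'a \<Rightarrow> real"
  assumes p: "1 < p" and gm: "g \<in> borel_measurable M"
    and gi: "integrable M (\<lambda>x. \<bar>g x\<bar> powr p)" and S: "S \<in> fmeasurable M"
  shows "set_integrable M S g"
  unfolding set_integrable_def
proof (rule Bochner_Integration.integrable_bound)
  show "integrable M (\<lambda>x. indicator S x + \<bar>g x\<bar> powr p)"
    using S gi by (intro Bochner_Integration.integrable_add integrable_real_indicator)
      (auto simp: fmeasurable_def)
  show "(\<lambda>x. indicator S x *\<^sub>R g x) \<in> borel_measurable M"
    using S gm by (intro borel_measurable_scaleR borel_measurable_indicator) (auto simp: fmeasurable_def)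
  have "\<bar>g x\<bar> \<le> 1 + \<bar>g x\<bar> powr p" for x
  proof (cases "\<bar>g x\<bar> \<le> 1")
    case False
    then have "\<bar>g x\<bar> powr 1 \<le> \<bar>g x\<bar> powr p" using p by (intro powr_mono) auto
    then show ?thesis using False by simp
  qed (simp add: add_increasing2)
  then show "AE x in M. norm (indicator S x *\<^sub>R g x) \<le> norm (indicator S x + \<bar>g x\<bar> powr p)"
    by (simp add: indicator_def)
qed

lemma integrable_indicator_lmeasurable:
  "S \<in> lmeasurable \<Longrightarrow> integrable lebesgue (indicator S :: _ \<Rightarrow> real)"
  by (intro integrable_real_indicator) (auto simp: fmeasurable_def)

definition average :: "(real^'n::finite) set \<Rightarrow> (real^'n \<Rightarrow> real) \<Rightarrow> real" where
  "average Q f = (LINT x:Q|lebesgue. f x) / measure lebesgue Q"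

lemma average_nonneg: "(\<And>x. 0 \<le> f x) \<Longrightarrow> 0 \<le> average Q f"
  unfolding average_def set_lebesgue_integral_def
  by (intro divide_nonneg_nonneg integral_nonneg_AE) auto

lemma average_eq_0: "(\<And>y. y \<in> Q \<Longrightarrow> h y = 0) \<Longrightarrow> average Q h = 0"
proof -
  assume "\<And>y. y \<in> Q \<Longrightarrow> h y = 0"
  then have "(\<lambda>x. indicator Q x * h x) = (\<lambda>x. 0)" by (auto simp: indicator_def)
  then show ?thesis by (simp add: average_def set_lebesgue_integral_def)
qed

lemma abs_average_le: "\<bar>average Q h\<bar> \<le> average Q (\<lambda>x. \<bar>h x\<bar>)"
proof -
  have "\<bar>LINT x:Q|lebesgue. h x\<bar> \<le> (LINT x:Q|lebesgue. \<bar>h x\<bar>)"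
    unfolding set_lebesgue_integral_def using integral_abs_bound[of lebesgue "\<lambda>x. indicator Q x * h x"]
    by (simp add: abs_mult)
  then show ?thesis by (simp add: average_def abs_div divide_right_mono)
qed

lemma average_mult_measure:
  "0 < measure lebesgue Q \<Longrightarrow> average Q h * measure lebesgue Q = (LINT x:Q|lebesgue. h x)"
  by (simp add: average_def)

lemma average_diff:
  assumes "set_integrable lebesgue Q h1" "set_integrable lebesgue Q h2"
  shows "average Q (\<lambda>x. h1 x - h2 x) = average Q h1 - average Q h2"
  using assms by (simp add: average_def diff_divide_distrib)

lemma average_sum:
  assumes "finite J" "\<And>j. j \<in> J \<Longrightarrow> set_integrable lebesgue Q (h j)"
  shows "average Q (\<lambda>x. \<Sum>j\<in>J. c j * h j x) = (\<Sum>j\<in>J. c j * average Q (h j))"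
proof -
  have "(LINT x:Q|lebesgue. \<Sum>j\<in>J. c j * h j x) = (\<Sum>j\<in>J. c j * (LINT x:Q|lebesgue. h j x))"
    using assms unfolding set_lebesgue_integral_def set_integrable_def
    by (simp add: Bochner_Integration.integral_sum sum_distrib_left ac_simps)
  then show ?thesis by (simp add: average_def sum_divide_distrib)
qed

lemma average_indicator_bounds:
  assumes Q: "Q \<in> lmeasurable" and S: "S \<in> sets lebesgue"
  shows "0 \<le> average Q (indicator S)" "average Q (indicator S) \<le> 1"
proof -
  have "(LINT x:Q|lebesgue. indicator S x) = measure lebesgue (Q \<inter> S)"
    using Q S by (simp add: set_lebesgue_integral_def indicator_inter_arith[symmetric] fmeasurable_def)
  moreover have "measure lebesgue (Q \<inter> S) \<le> measure lebesgue Q"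
    using Q S by (intro measure_mono_fmeasurable) auto
  ultimately show "0 \<le> average Q (indicator S)" "average Q (indicator S) \<le> 1"
    by (auto simp: average_def divide_le_eq_1 less_le)
qed

lemma average_indicator_superset:
  assumes "0 < measure lebesgue Q" "Q \<subseteq> S"
  shows "average Q (indicator S) = 1"
proof -
  have "(\<lambda>x. indicator Q x * indicator S x :: real) = indicator Q"
    using assms(2) by (auto simp: indicator_def fun_eq_iff)
  then show ?thesis using assms(1) by (simp add: average_def set_lebesgue_integral_def)
qed

lemma average_le_bound:
  assumes Q: "Q \<in> lmeasurable" "0 < measure lebesgue Q"
    and h: "set_integrable lebesgue Q h" "\<And>x. x \<in> Q \<Longrightarrow> h x \<le> N"
  shows "average Q h \<le> N"
proof -
  have "(LINT x:Q|lebesgue. h x) \<le> (LINT x:Q|lebesgue. N)"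
    using Q h by (intro set_integral_mono) (auto simp: set_integrable_def integrable_indicator_lmeasurable)
  also have "\<dots> = N * measure lebesgue Q"
    using Q by (simp add: set_integral_const fmeasurableD emeasure_eq_measure2)
  finally show ?thesis using Q by (simp add: average_def divide_le_eq)
qed

section \<open>The maximal function of a finite family of dyadic cubes\<close>

lemma dyadic_Union_average_ge:
  fixes g :: "real^'n::finite \<Rightarrow> real"
  assumes "finite S" "S \<subseteq> dyadic_cubes"
    and "\<And>Q. Q \<in> S \<Longrightarrow> set_integrable lebesgue Q g"
    and "\<And>Q. Q \<in> S \<Longrightarrow> v * measure lebesgue Q \<le> (LINT x:Q|lebesgue. g x)"
  shows "v * measure lebesgue (\<Union>S) \<le> (LINT x:\<Union>S|lebesgue. g x)"
  using assms
proof (induction "card S" arbitrary: S rule: less_induct)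
  case less
  show ?case
  proof (cases "S = {}")
    case True then show ?thesis by (simp add: set_lebesgue_integral_def)
  next
    case False
    obtain Q where Q: "Q \<in> S" and maxQ: "\<And>Q'. Q' \<in> S \<Longrightarrow> Q \<subseteq> Q' \<Longrightarrow> Q' = Q"
      using finite_has_maximal[OF less.prems(1) False] by blast
    \<comment> \<open>Dyadic cubes are nested or disjoint, so those not inside the maximal \<open>Q\<close> are disjoint from it.\<close>
    define S' where "S' = {Q'\<in>S. \<not> Q' \<subseteq> Q}"
    have S'S: "S' \<subseteq> S" and "Q \<notin> S'" by (auto simp: S'_def)
    then have fin': "finite S'" and card: "card S' < card S"
      using less.prems(1) Q by (auto intro: finite_subset psubset_card_mono)
    have un: "\<Union>S = Q \<union> \<Union>S'" unfolding S'_def using Q by blast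
    have disj: "Q \<inter> \<Union>S' = {}"
    proof -
      have "Q \<inter> Q' = {}" if "Q' \<in> S'" for Q'
        using that Q maxQ less.prems(2) dyadic_cubes_nested_or_disjoint[of Q Q']
        by (auto simp: S'_def)
      then show ?thesis by blast
    qed
    have cubes': "\<And>Q'. Q' \<in> S' \<Longrightarrow> Q' \<in> lmeasurable"
      using S'S less.prems(2) dyadic_cubes_lmeasurable by blast
    have int': "set_integrable lebesgue (\<Union>S') g"
      using set_integrable_UN[of S' lebesgue "\<lambda>Q. Q" g] fin' S'S less.prems(3) cubes' by auto
    have "Q \<in> lmeasurable" using Q less.prems(2) dyadic_cubes_lmeasurable by blast
    moreover have "\<Union>S' \<in> lmeasurable" using fmeasurable.finite_Union[OF fin'] cubes' by blast
    ultimately have "measure lebesgue (\<Union>S) = measure lebesgue Q + measure lebesgue (\<Union>S')"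
      using measure_Un3[of Q lebesgue "\<Union>S'"] disj un by simp
    moreover have "(LINT x:\<Union>S|lebesgue. g x) = (LINT x:Q|lebesgue. g x) + (LINT x:\<Union>S'|lebesgue. g x)"
      unfolding un by (rule set_integral_Un[OF disj less.prems(3)[OF Q] int'])
    moreover have "v * measure lebesgue (\<Union>S') \<le> (LINT x:\<Union>S'|lebesgue. g x)"
      using less.hyps[OF card fin'] S'S less.prems by blast
    ultimately show ?thesis using less.prems(4)[OF Q] by (simp add: distrib_left)
  qed
qed

definition finite_maximal ::
    "('i \<Rightarrow> (real^'n::finite) set) \<Rightarrow> 'i set \<Rightarrow> (real^'n \<Rightarrow> real) \<Rightarrow> real^'n \<Rightarrow> real" where
  "finite_maximal Q J g x = Max (insert 0 ((\<lambda>i. average (Q i) g) ` {i\<in>J. x \<in> Q i}))"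

definition maximal_levels :: "('i \<Rightarrow> (real^'n::finite) set) \<Rightarrow> 'i set \<Rightarrow> (real^'n \<Rightarrow> real) \<Rightarrow> real set" where
  "maximal_levels Q J g = {v \<in> (\<lambda>i. average (Q i) g) ` J. 0 < v}"

context
  fixes Q :: "'i \<Rightarrow> (real^'n::finite) set" and J :: "'i set" and g :: "real^'n \<Rightarrow> real"
  assumes J: "finite J"
begin

lemma finite_maximal_nonneg: "0 \<le> finite_maximal Q J g x"
  unfolding finite_maximal_def using J by (simp add: Max_ge_iff)

lemma average_le_finite_maximal: "i \<in> J \<Longrightarrow> x \<in> Q i \<Longrightarrow> average (Q i) g \<le> finite_maximal Q J g x"
  unfolding finite_maximal_def using J by (auto intro: Max_ge)

lemma finite_maximal_attained:
  assumes "0 < finite_maximal Q J g x"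
  obtains i where "i \<in> J" "x \<in> Q i" "finite_maximal Q J g x = average (Q i) g"
proof -
  have "finite_maximal Q J g x \<in> insert 0 ((\<lambda>i. average (Q i) g) ` {i\<in>J. x \<in> Q i})"
    unfolding finite_maximal_def using J by (intro Max_in) auto
  then show ?thesis using assms that by auto
qed

lemma finite_maximal_in_levels: "finite_maximal Q J g x \<in> insert 0 (maximal_levels Q J g)"
proof (cases "finite_maximal Q J g x = 0")
  case False
  then have pos: "0 < finite_maximal Q J g x"
    using finite_maximal_nonneg[of x] by simp
  then obtain i where "i \<in> J" "finite_maximal Q J g x = average (Q i) g"
    by (rule finite_maximal_attained)
  with pos show ?thesis unfolding maximal_levels_def by auto
qed simp

lemma finite_maximal_level_set:
  assumes "0 < v"
  shows "{x. v \<le> finite_maximal Q J g x} = \<Union>(Q ` {i\<in>J. v \<le> average (Q i) g})"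
proof (intro equalityI subsetI)
  fix x assume "x \<in> {x. v \<le> finite_maximal Q J g x}"
  then have v: "v \<le> finite_maximal Q J g x" by simp
  with assms have "0 < finite_maximal Q J g x" by linarith
  then obtain i where "i \<in> J" "x \<in> Q i" "finite_maximal Q J g x = average (Q i) g"
    by (rule finite_maximal_attained)
  with v show "x \<in> \<Union>(Q ` {i\<in>J. v \<le> average (Q i) g})" by auto
next
  fix x assume "x \<in> \<Union>(Q ` {i\<in>J. v \<le> average (Q i) g})"
  then obtain i where "i \<in> J" "v \<le> average (Q i) g" "x \<in> Q i" by auto
  then show "x \<in> {x. v \<le> finite_maximal Q J g x}"
    using average_le_finite_maximal[of i x] by simp
qed

lemma finite_maximal_layer_cake:
  fixes h :: "real \<Rightarrow> real"
  assumes "h 0 = 0"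
  shows "h (finite_maximal Q J g x) = (\<Sum>v\<in>maximal_levels Q J g.
           indicator {y. v \<le> finite_maximal Q J g y} x * (h v - h (pred_below (maximal_levels Q J g) v)))"
proof -
  let ?V = "maximal_levels Q J g" and ?M = "finite_maximal Q J g x"
  have fin: "finite ?V" and pos: "\<forall>v\<in>?V. 0 < v"
    using J by (auto simp: maximal_levels_def)
  have "(\<Sum>v\<in>?V. indicator {y. v \<le> finite_maximal Q J g y} x * (h v - h (pred_below ?V v)))
      = (\<Sum>v\<in>?V. if v \<le> ?M then h v - h (pred_below ?V v) else 0)"
    by (rule sum.cong) (auto simp: indicator_def)
  also have "\<dots> = (\<Sum>v\<in>{v\<in>?V. v \<le> ?M}. h v - h (pred_below ?V v))"
    using fin by (simp add: sum.inter_filter)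
  also have "\<dots> = h ?M"
    by (rule sum_pred_below_telescope[where h = h, OF fin pos assms finite_maximal_in_levels[of x]])
  finally show ?thesis by simp
qed

lemma sum_indicator_disjoint_le_finite_maximal:
  fixes p :: real
  assumes p: "0 \<le> p" and g0: "\<And>x. 0 \<le> g x"
    and E: "disjoint_family_on E J" "\<And>i. i \<in> J \<Longrightarrow> E i \<subseteq> Q i"
  shows "(\<Sum>i\<in>J. indicator (E i) x * average (Q i) g powr p) \<le> finite_maximal Q J g x powr p"
proof (cases "\<exists>i\<in>J. x \<in> E i")
  case True
  then obtain i where i: "i \<in> J" "x \<in> E i" by blast
  have "x \<notin> E j" if "j \<in> J" "j \<noteq> i" for j
    using E(1) i that unfolding disjoint_family_on_def by blast
  then have "(\<Sum>j\<in>J. indicator (E j) x * average (Q j) g powr p)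
      = (\<Sum>j\<in>J. if j = i then average (Q i) g powr p else 0)"
    using i(2) by (intro sum.cong) auto
  also have "\<dots> = average (Q i) g powr p" using J i(1) by simp
  also have "\<dots> \<le> finite_maximal Q J g x powr p"
  proof (rule powr_mono2[OF p])
    show "0 \<le> average (Q i) g" by (rule average_nonneg[OF g0])
    show "average (Q i) g \<le> finite_maximal Q J g x"
      using i E(2)[OF i(1)] by (intro average_le_finite_maximal) auto
  qed
  finally show ?thesis .
next
  case False
  then have "(\<Sum>i\<in>J. indicator (E i) x * average (Q i) g powr p) = 0" by (intro sum.neutral) auto
  then show ?thesis by simp
qed

end

context
  fixes Q :: "'i \<Rightarrow> (real^'n::finite) set" and J :: "'i set" and g :: "real^'n \<Rightarrow> real"
  assumes J: "finite J" and QJ: "\<And>i. i \<in> J \<Longrightarrow> Q i \<in> dyadic_cubes"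
begin

lemma finite_maximal_level_set_lmeasurable:
  "0 < v \<Longrightarrow> {x. v \<le> finite_maximal Q J g x} \<in> lmeasurable"
  unfolding finite_maximal_level_set[OF J]
  using J QJ dyadic_cubes_lmeasurable by (intro fmeasurable.finite_UN) auto

lemma integral_mult_finite_maximal_comp:
  fixes h :: "real \<Rightarrow> real" and w :: "real^'n \<Rightarrow> real"
  assumes h: "h 0 = 0" and w: "\<And>S. S \<in> lmeasurable \<Longrightarrow> set_integrable lebesgue S w"
  defines "V \<equiv> maximal_levels Q J g"
  shows "integrable lebesgue (\<lambda>x. w x * h (finite_maximal Q J g x))"
    and "(\<integral>x. w x * h (finite_maximal Q J g x) \<partial>lebesgue) = (\<Sum>v\<in>V.
          (LINT x:{x. v \<le> finite_maximal Q J g x}|lebesgue. w x) * (h v - h (pred_below V v)))"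
proof -
  let ?A = "\<lambda>v. {x. v \<le> finite_maximal Q J g x}"
  have eq: "(\<lambda>x. w x * h (finite_maximal Q J g x))
      = (\<lambda>x. \<Sum>v\<in>V. (indicator (?A v) x * w x) * (h v - h (pred_below V v)))"
    unfolding V_def finite_maximal_layer_cake[OF J, of h, OF h] by (simp add: sum_distrib_left ac_simps)
  have "integrable lebesgue (\<lambda>x. indicator (?A v) x * w x)" if "v \<in> V" for v
    using w[OF finite_maximal_level_set_lmeasurable] that
    by (simp add: V_def maximal_levels_def set_integrable_def)
  then show "integrable lebesgue (\<lambda>x. w x * h (finite_maximal Q J g x))"
    and "(\<integral>x. w x * h (finite_maximal Q J g x) \<partial>lebesgue) = (\<Sum>v\<in>V.
          (LINT x:?A v|lebesgue. w x) * (h v - h (pred_below V v)))"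
    unfolding eq by (auto simp: set_lebesgue_integral_def)
qed

lemma finite_maximal_weak_type:
  assumes v: "0 < v" and g: "\<And>i. i \<in> J \<Longrightarrow> set_integrable lebesgue (Q i) g"
  shows "v * measure lebesgue {x. v \<le> finite_maximal Q J g x}
           \<le> (LINT x:{x. v \<le> finite_maximal Q J g x}|lebesgue. g x)"
  unfolding finite_maximal_level_set[OF J v]
proof (rule dyadic_Union_average_ge)
  show "finite (Q ` {i \<in> J. v \<le> average (Q i) g})" "Q ` {i \<in> J. v \<le> average (Q i) g} \<subseteq> dyadic_cubes"
    using J QJ by auto
  fix R assume "R \<in> Q ` {i \<in> J. v \<le> average (Q i) g}"
  then obtain i where i: "i \<in> J" "v \<le> average (Q i) g" "R = Q i" by auto
  then show "set_integrable lebesgue R g" using g by simp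
  have "0 < measure lebesgue R" using i QJ measure_dyadic_cubes_pos by blast
  then show "v * measure lebesgue R \<le> (LINT x:R|lebesgue. g x)"
    using i by (simp add: average_def pos_le_divide_eq)
qed

lemma finite_maximal_level_estimate:
  fixes p :: real
  assumes p: "1 < p" and g: "\<And>S. S \<in> lmeasurable \<Longrightarrow> set_integrable lebesgue S g"
    and v: "v \<in> maximal_levels Q J g"
  defines "A \<equiv> {x. v \<le> finite_maximal Q J g x}" and "u \<equiv> pred_below (maximal_levels Q J g) v"
  shows "measure lebesgue A * (v powr p - u powr p)
           \<le> p / (p - 1) * (LINT x:A|lebesgue. g x) * (v powr (p - 1) - u powr (p - 1))"
proof -
  have v0: "0 < v" and fin: "finite (maximal_levels Q J g)"
    using v J by (auto simp: maximal_levels_def)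
  note P = pred_below_bounds[OF fin v0, folded u_def]
  have q: "0 \<le> p / (p - 1)" using p by simp
  have e: "0 \<le> v powr (p - 1) - u powr (p - 1)"
    using P(2,3) p by (auto intro!: powr_mono2)
  have "measure lebesgue A * (v powr p - u powr p)
      \<le> measure lebesgue A * (p / (p - 1) * v * (v powr (p - 1) - u powr (p - 1)))"
    by (intro mult_left_mono powr_diff_le_powr_pred_diff[OF p P(3) P(2)] measure_nonneg)
  also have "\<dots> = p / (p - 1) * (v powr (p - 1) - u powr (p - 1)) * (v * measure lebesgue A)"
    by (simp add: ac_simps)
  also have "\<dots> \<le> p / (p - 1) * (v powr (p - 1) - u powr (p - 1)) * (LINT x:A|lebesgue. g x)"
    unfolding A_def using finite_maximal_weak_type[OF v0] g QJ dyadic_cubes_lmeasurable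
      mult_nonneg_nonneg[OF q e] by (intro mult_left_mono) auto
  finally show ?thesis by (simp add: ac_simps)
qed

lemma finite_maximal_Lp_bound:
  fixes p :: real
  assumes p: "1 < p" and g0: "\<And>x. 0 \<le> g x" and gm: "g \<in> borel_measurable lebesgue"
    and gi: "integrable lebesgue (\<lambda>x. g x powr p)"
  shows "integrable lebesgue (\<lambda>x. finite_maximal Q J g x powr p)"
    and "(\<integral>x. finite_maximal Q J g x powr p \<partial>lebesgue)
           \<le> 4/3 * (p/(p-1) * (4*(p/(p-1))) powr (p-1)) * (\<integral>x. g x powr p \<partial>lebesgue)"
proof -
  define q where "q = p / (p - 1)"
  define K where "K = q * (4 * q) powr (p - 1)"
  let ?M = "finite_maximal Q J g" and ?V = "maximal_levels Q J g"
  let ?A = "\<lambda>v. {x. v \<le> ?M x}" and ?d = "\<lambda>h v. h v - h (pred_below ?V v)"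
  have q: "0 < q" using p by (simp add: q_def)
  have gS: "\<And>S. S \<in> lmeasurable \<Longrightarrow> set_integrable lebesgue S g"
    using Lp_set_integrable[OF p gm] gi g0 by (simp add: abs_of_nonneg)
  have oneS: "\<And>S. S \<in> lmeasurable \<Longrightarrow> set_integrable lebesgue S (\<lambda>_. 1::real)"
    by (simp add: set_integrable_def integrable_indicator_lmeasurable)
  note Mp = integral_mult_finite_maximal_comp[of "\<lambda>t. t powr p", OF _ oneS, simplified]
  note gM = integral_mult_finite_maximal_comp[of "\<lambda>t. t powr (p - 1)", OF _ gS, simplified]
  show Mp_int: "integrable lebesgue (\<lambda>x. ?M x powr p)" by (rule Mp(1))
  have "(\<integral>x. ?M x powr p \<partial>lebesgue) = (\<Sum>v\<in>?V. measure lebesgue (?A v) * ?d (\<lambda>t. t powr p) v)"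
    unfolding Mp(2) using finite_maximal_level_set_lmeasurable
    by (intro sum.cong refl) (auto simp: maximal_levels_def set_integral_const fmeasurableD emeasure_eq_measure2)
  also have "\<dots> \<le> (\<Sum>v\<in>?V. q * (LINT x:?A v|lebesgue. g x) * ?d (\<lambda>t. t powr (p - 1)) v)"
    unfolding q_def using finite_maximal_level_estimate[OF p gS] by (intro sum_mono) auto
  also have "\<dots> = q * (\<integral>x. g x * ?M x powr (p - 1) \<partial>lebesgue)"
    unfolding gM(2) by (simp add: sum_distrib_left ac_simps)
  also have "\<dots> = (\<integral>x. q * g x * ?M x powr (p - 1) \<partial>lebesgue)"
    by (simp add: ac_simps)
  \<comment> \<open>\<open>?M\<close> is a step function, so \<open>\<integral> ?M\<^sup>p\<close> is finite and the term \<open>\<integral> ?M\<^sup>p / 4\<close> can be absorbed.\<close>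
  also have "\<dots> \<le> (\<integral>x. ?M x powr p / 4 + K * g x powr p \<partial>lebesgue)"
    unfolding K_def using gM(1) Mp_int gi
    by (intro integral_mono mult_powr_pred_le_absorb[OF p q g0 finite_maximal_nonneg[OF J]])
      (auto simp: mult.assoc)
  also have "\<dots> = (\<integral>x. ?M x powr p \<partial>lebesgue) / 4 + K * (\<integral>x. g x powr p \<partial>lebesgue)"
    using Mp_int gi by simp
  finally show "(\<integral>x. ?M x powr p \<partial>lebesgue) \<le> 4/3 * (p/(p-1) * (4*(p/(p-1))) powr (p-1)) * (\<integral>x. g x powr p \<partial>lebesgue)"
    unfolding q_def[symmetric] K_def[symmetric] by linarith
qed

lemma sparse_sum_le_finite_maximal:
  fixes p :: real
  assumes p: "0 \<le> p" and g0: "\<And>x. 0 \<le> g x"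
    and Mp: "integrable lebesgue (\<lambda>x. finite_maximal Q J g x powr p)"
    and E: "disjoint_family_on E J" "\<And>i. i \<in> J \<Longrightarrow> E i \<in> sets lebesgue \<and> E i \<subseteq> Q i
              \<and> 1/2 * measure lebesgue (Q i) \<le> measure lebesgue (E i)"
  shows "(\<Sum>i\<in>J. measure lebesgue (Q i) * average (Q i) g powr p)
           \<le> 2 * (\<integral>x. finite_maximal Q J g x powr p \<partial>lebesgue)"
proof -
  let ?a = "\<lambda>i. average (Q i) g powr p"
  have E_int: "integrable lebesgue (indicator (E i) :: _ \<Rightarrow> real)" if "i \<in> J" for i
  proof -
    have "E i \<subseteq> Q i" "E i \<in> sets lebesgue" using E(2)[OF that] by auto
    then have "E i \<in> lmeasurable"
      by (intro fmeasurableI2[OF dyadic_cubes_lmeasurable[OF QJ[OF that]]])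
    then show ?thesis by (rule integrable_indicator_lmeasurable)
  qed
  have pointwise: "(\<Sum>i\<in>J. indicator (E i) x * ?a i) \<le> finite_maximal Q J g x powr p" for x
    using E by (intro sum_indicator_disjoint_le_finite_maximal[OF J p g0]) auto
  have "(\<Sum>i\<in>J. measure lebesgue (Q i) * ?a i) \<le> (\<Sum>i\<in>J. 2 * (measure lebesgue (E i) * ?a i))"
  proof (rule sum_mono)
    fix i assume "i \<in> J"
    then have "1/2 * measure lebesgue (Q i) \<le> measure lebesgue (E i)" using E(2) by blast
    then have "measure lebesgue (Q i) * ?a i \<le> (2 * measure lebesgue (E i)) * ?a i"
      by (intro mult_right_mono) simp_all
    then show "measure lebesgue (Q i) * ?a i \<le> 2 * (measure lebesgue (E i) * ?a i)"
      by simp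
  qed
  also have "\<dots> = 2 * (\<integral>x. (\<Sum>i\<in>J. indicator (E i) x * ?a i) \<partial>lebesgue)"
    using E_int by (subst Bochner_Integration.integral_sum) (auto simp: integral_indicator sum_distrib_left)
  also have "\<dots> \<le> 2 * (\<integral>x. finite_maximal Q J g x powr p \<partial>lebesgue)"
    using E_int Mp pointwise
    by (intro mult_left_mono integral_mono Bochner_Integration.integrable_sum integrable_mult_left) auto
  finally show ?thesis .
qed

end

section \<open>Functions in \<open>L\<^sup>p\<close> have finite sparse norm\<close>

lemma sr_term_eq_average:
  fixes f :: "real^'n::finite \<Rightarrow> real"
  assumes p: "1 < p" and Q: "0 < measure lebesgue Q"
  shows "(measure lebesgue Q powr (- 1 / dual_exp p) * (LINT x:Q|lebesgue. \<bar>f x\<bar>)) powr p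
           = measure lebesgue Q * average Q (\<lambda>x. \<bar>f x\<bar>) powr p"
proof -
  let ?\<mu> = "measure lebesgue Q" and ?s = "LINT x:Q|lebesgue. \<bar>f x\<bar>"
  have s: "0 \<le> ?s"
    unfolding set_lebesgue_integral_def by (rule integral_nonneg_AE) simp
  have "- 1 / dual_exp p = (1 - p) / p" using p by (simp add: dual_exp_def field_simps)
  then have "(?\<mu> powr (- 1 / dual_exp p) * ?s) powr p = ?\<mu> powr (1 - p) * ?s powr p"
    using p Q s by (simp add: powr_mult powr_powr)
  also have "\<dots> = ?\<mu> * (?s / ?\<mu>) powr p"
    using Q s by (simp add: powr_divide powr_diff powr_mult_base)
  finally show ?thesis by (simp add: average_def)
qed

lemma sr_sum_le_integral_powr:
  fixes f :: "real^'n::finite \<Rightarrow> real"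
  assumes p: "1 < p" and fm: "f \<in> borel_measurable lebesgue"
    and fi: "integrable lebesgue (\<lambda>x. \<bar>f x\<bar> powr p)" and sp: "sparse Q I"
  shows "sr_sum p f Q I
           \<le> ennreal (8/3 * (p/(p-1) * (4*(p/(p-1))) powr (p-1)) * (\<integral>x. \<bar>f x\<bar> powr p \<partial>lebesgue))"
    (is "_ \<le> ennreal ?C")
proof -
  obtain E where QI: "\<And>i. i \<in> I \<Longrightarrow> Q i \<in> dyadic_cubes" and E: "disjoint_family_on E I"
    "\<And>i. i \<in> I \<Longrightarrow> E i \<in> sets lebesgue \<and> E i \<subseteq> Q i \<and> 1/2 * measure lebesgue (Q i) \<le> measure lebesgue (E i)"
    using sp unfolding sparse_def by auto
  let ?g = "\<lambda>x. \<bar>f x\<bar>"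
  let ?t = "\<lambda>i. measure lebesgue (Q i) * average (Q i) ?g powr p"
  have "sr_sum p f Q I = (\<Sum>i. if i \<in> I then ennreal (?t i) else 0)"
    unfolding sr_sum_def
    by (intro suminf_cong) (use sr_term_eq_average[OF p measure_dyadic_cubes_pos[OF QI]] in auto)
  also have "\<dots> \<le> ennreal ?C"
  proof (rule suminf_le_const)
    fix n
    let ?J = "I \<inter> {..<n}"
    have J: "finite ?J" and QJ: "\<And>i. i \<in> ?J \<Longrightarrow> Q i \<in> dyadic_cubes" using QI by auto
    note Mp = finite_maximal_Lp_bound[where Q = Q and J = ?J and g = ?g, OF J QJ p _ _ fi[simplified]]
    have "(\<Sum>i<n. if i \<in> I then ennreal (?t i) else 0) = ennreal (\<Sum>i\<in>?J. ?t i)"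
      by (simp add: sum.If_cases sum_ennreal Int_commute)
    also have "(\<Sum>i\<in>?J. ?t i) \<le> 2 * (\<integral>x. finite_maximal Q ?J ?g x powr p \<partial>lebesgue)"
      using p fm E disjoint_family_on_mono[OF _ E(1), of ?J]
      by (intro sparse_sum_le_finite_maximal[OF J QJ] Mp(1)) auto
    also have "\<dots> \<le> ?C"
      using Mp(2) fm by simp
    finally show "(\<Sum>i<n. if i \<in> I then ennreal (?t i) else 0) \<le> ennreal ?C"
      by (simp add: ennreal_leI)
  qed (rule summableI)
  finally show ?thesis .
qed

lemma Lp_subset_SR_pp:
  assumes p: "1 < p"
  shows "Lp p \<subseteq> SR_pp p"
proof
  fix f :: "real^'n::finite \<Rightarrow> real"
  assume "f \<in> Lp p"
  then have fm: "f \<in> borel_measurable lebesgue" and fi: "integrable lebesgue (\<lambda>x. \<bar>f x\<bar> powr p)"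
    by (auto simp: Lp_def)
  have "loc_integrable f"
    unfolding loc_integrable_def using Lp_set_integrable[OF p fm fi] lmeasurable_compact by blast
  moreover have "sr_norm_p p f < \<infinity>"
    unfolding sr_norm_p_def using sr_sum_le_integral_powr[OF p fm fi]
    by (intro le_less_trans[OF SUP_least[of _ _ "ennreal _"]]) auto
  ultimately show "f \<in> SR_pp p" by (simp add: SR_pp_def)
qed

section \<open>Dyadic expectations\<close>

definition centred_cube :: "real \<Rightarrow> (real^'n::finite) set" where
  "centred_cube R = {x. \<forall>i. \<bar>x $ i\<bar> \<le> R}"

lemma centred_cube_eq_cbox: "centred_cube R = cbox (- (\<chi> i. R)) (\<chi> i. R)"
proof (rule set_eqI)
  fix x :: "real^'n"
  have "\<And>i. \<bar>x $ i\<bar> \<le> R \<longleftrightarrow> -R \<le> x $ i \<and> x $ i \<le> R" by auto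
  then show "x \<in> centred_cube R \<longleftrightarrow> x \<in> cbox (- (\<chi> i. R)) (\<chi> i. R)"
    by (simp add: centred_cube_def mem_box_cart)
qed

lemma centred_cube_lmeasurable: "centred_cube R \<in> lmeasurable"
  unfolding centred_cube_eq_cbox by simp

lemma compact_centred_cube: "compact (centred_cube R)"
  unfolding centred_cube_eq_cbox by simp

lemma centred_cube_mono: "R \<le> R' \<Longrightarrow> centred_cube R \<subseteq> centred_cube R'"
  by (auto simp: centred_cube_def intro: order_trans)

lemma norm_le_imp_mem_centred_cube: "norm x \<le> R \<Longrightarrow> x \<in> centred_cube R"
  unfolding centred_cube_def using component_le_norm_cart order_trans by blast

lemma dyadic_cube_subset_centred_cube:
  assumes "x \<in> dyadic_cube (int k) m" "x \<in> centred_cube R"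
  shows "dyadic_cube (int k) m \<subseteq> centred_cube (R + 1)"
proof
  fix y assume y: "y \<in> dyadic_cube (int k) m"
  have "2 powr (- real k) \<le> 2 powr 0" by (rule powr_mono) auto
  then have d: "\<bar>x $ i - y $ i\<bar> < 1" for i
    using dyadic_cube_component_dist[OF assms(1) y, of i] by simp
  have xR: "\<bar>x $ i\<bar> \<le> R" for i using assms(2) by (simp add: centred_cube_def)
  have "\<bar>y $ i\<bar> \<le> R + 1" for i
    using d[of i] xR[of i] unfolding abs_le_iff abs_less_iff by linarith
  then show "y \<in> centred_cube (R + 1)" by (simp add: centred_cube_def)
qed

definition dyadic_grid :: "nat \<Rightarrow> real \<Rightarrow> ('n::finite \<Rightarrow> int) set" where
  "dyadic_grid k R = {m. \<forall>i. \<bar>m i\<bar> \<le> \<lceil>2 ^ k * R\<rceil> + 1}"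

lemma finite_dyadic_grid: "finite (dyadic_grid k R :: ('n::finite \<Rightarrow> int) set)"
proof -
  let ?c = "\<lceil>2 ^ k * R\<rceil> + 1"
  have "dyadic_grid k R \<subseteq> Pi\<^sub>E UNIV (\<lambda>_. {-?c..?c})"
  proof
    fix m assume "m \<in> dyadic_grid k R"
    then have "\<bar>m i\<bar> \<le> ?c" for i by (simp add: dyadic_grid_def)
    then have "m i \<in> {-?c..?c}" for i by (metis abs_le_iff atLeastAtMost_iff minus_le_iff)
    then show "m \<in> Pi\<^sub>E UNIV (\<lambda>_. {-?c..?c})" by (simp add: PiE_UNIV_domain Pi_def)
  qed
  moreover have "finite (Pi\<^sub>E (UNIV::'n set) (\<lambda>_. {-?c..?c}))" by (intro finite_PiE) auto
  ultimately show ?thesis by (rule finite_subset)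
qed

lemma dyadic_index_in_grid:
  assumes "x \<in> centred_cube R"
  shows "dyadic_index (int k) x \<in> dyadic_grid k R"
proof -
  have "\<bar>\<lfloor>2 ^ k * x $ i\<rfloor>\<bar> \<le> \<lceil>2 ^ k * R\<rceil> + 1" for i
  proof -
    have "\<bar>x $ i\<bar> \<le> R" using assms by (simp add: centred_cube_def)
    then have "\<bar>2 ^ k * x $ i\<bar> \<le> 2 ^ k * R" by (simp add: abs_mult)
    then have a: "- (2 ^ k * R) \<le> 2 ^ k * x $ i" "2 ^ k * x $ i \<le> 2 ^ k * R"
      unfolding abs_le_iff by linarith+
    have "\<lfloor>2 ^ k * x $ i\<rfloor> \<le> \<lceil>2 ^ k * R\<rceil>"
      using a(2) by (meson floor_le_ceiling floor_mono order_trans le_of_int_ceiling of_int_floor_le)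
    moreover have "- \<lceil>2 ^ k * R\<rceil> \<le> \<lfloor>2 ^ k * x $ i\<rfloor>"
      using floor_mono[OF a(1)] by (simp add: ceiling_def)
    ultimately show ?thesis by linarith
  qed
  then show ?thesis by (simp add: dyadic_grid_def dyadic_index_def powr_realpow)
qed

lemma sum_dyadic_indicator:
  fixes a :: "('n::finite \<Rightarrow> int) \<Rightarrow> real"
  assumes "finite F"
  shows "(\<Sum>m\<in>F. a m * indicator (dyadic_cube k m) x)
           = (if dyadic_index k x \<in> F then a (dyadic_index k x) else 0)"
proof -
  have "(\<Sum>m\<in>F. a m * indicator (dyadic_cube k m) x) = (\<Sum>m\<in>F. if dyadic_index k x = m then a m else 0)"
    by (rule sum.cong) (auto simp: indicator_def mem_dyadic_cube_iff)
  then show ?thesis using assms by (simp add: sum.delta)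
qed

lemma integrable_dyadic_step:
  "finite F \<Longrightarrow> integrable lebesgue (\<lambda>x. \<Sum>m\<in>F. c m * indicator (dyadic_cube k m) x :: real)"
  by (intro Bochner_Integration.integrable_sum integrable_mult_right
      integrable_indicator_lmeasurable dyadic_cube_lmeasurable)

lemma integral_dyadic_step:
  "finite F \<Longrightarrow> (\<integral>x. (\<Sum>m\<in>F. c m * indicator (dyadic_cube k m) x) \<partial>lebesgue)
     = (\<Sum>m\<in>F. c m * measure lebesgue (dyadic_cube k m))"
  by (subst Bochner_Integration.integral_sum)
     (auto intro!: integrable_mult_right integrable_indicator_lmeasurable dyadic_cube_lmeasurable
       simp: integral_indicator)

definition bounded_supported :: "real \<Rightarrow> (real^'n::finite \<Rightarrow> real) \<Rightarrow> bool" where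
  "bounded_supported R h \<longleftrightarrow> h \<in> borel_measurable lebesgue \<and> (\<exists>N. \<forall>x. \<bar>h x\<bar> \<le> N)
     \<and> (\<forall>x. x \<notin> centred_cube R \<longrightarrow> h x = 0)"

lemma bounded_supported_integrable:
  assumes "bounded_supported R h"
  shows "integrable lebesgue h"
proof -
  obtain N where N: "\<And>x. \<bar>h x\<bar> \<le> N" using assms by (auto simp: bounded_supported_def)
  have N0: "0 \<le> N" using N[of undefined] by linarith
  have "integrable lebesgue (\<lambda>x. N * indicator (centred_cube R) x)"
    by (intro integrable_mult_right integrable_indicator_lmeasurable centred_cube_lmeasurable)
  then show ?thesis
  proof (rule Bochner_Integration.integrable_bound)
    show "h \<in> borel_measurable lebesgue" using assms by (simp add: bounded_supported_def)
    have "norm (h x) \<le> norm (N * indicator (centred_cube R) x :: real)" for x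
    proof (cases "x \<in> centred_cube R")
      case False then have "h x = 0" using assms by (simp add: bounded_supported_def)
      then show ?thesis by simp
    qed (use N[of x] N0 in simp)
    then show "AE x in lebesgue. norm (h x) \<le> norm (N * indicator (centred_cube R) x :: real)"
      by simp
  qed
qed

lemma bounded_supported_set_integrable:
  "bounded_supported R h \<Longrightarrow> S \<in> sets lebesgue \<Longrightarrow> set_integrable lebesgue S h"
  unfolding set_integrable_def
  by (rule integrable_mult_indicator[OF _ bounded_supported_integrable])

lemma bounded_supported_mono: "bounded_supported R h \<Longrightarrow> R \<le> R' \<Longrightarrow> bounded_supported R' h"
  unfolding bounded_supported_def using centred_cube_mono by blast

lemma bounded_supported_abs: "bounded_supported R h \<Longrightarrow> bounded_supported R (\<lambda>x. \<bar>h x\<bar>)"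
  unfolding bounded_supported_def by auto

lemma bounded_supported_indicator:
  "S \<in> sets lebesgue \<Longrightarrow> S \<subseteq> centred_cube R \<Longrightarrow> bounded_supported R (indicator S)"
  unfolding bounded_supported_def by (auto simp: indicator_def intro!: exI[of _ 1])

lemma bounded_supported_sum:
  assumes "finite J" "\<And>j. j \<in> J \<Longrightarrow> bounded_supported R (h j)"
  shows "bounded_supported R (\<lambda>x. \<Sum>j\<in>J. c j * h j x)"
  using assms
proof (induction J rule: finite_induct)
  case empty then show ?case by (auto simp: bounded_supported_def)
next
  case (insert j J)
  then have hj: "bounded_supported R (h j)" and IH: "bounded_supported R (\<lambda>x. \<Sum>j\<in>J. c j * h j x)"
    by auto
  then obtain N1 N2 where N: "\<And>x. \<bar>h j x\<bar> \<le> N1" "\<And>x. \<bar>\<Sum>j\<in>J. c j * h j x\<bar> \<le> N2"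
    by (auto simp: bounded_supported_def)
  have "\<bar>c j * h j x + (\<Sum>j\<in>J. c j * h j x)\<bar> \<le> \<bar>c j\<bar> * N1 + N2" for x
  proof -
    have "\<bar>c j * h j x\<bar> \<le> \<bar>c j\<bar> * N1" using N(1)[of x] by (simp add: abs_mult mult_left_mono)
    then show ?thesis using N(2)[of x] abs_triangle_ineq[of "c j * h j x"] by linarith
  qed
  then show ?case using hj IH insert.hyps unfolding bounded_supported_def by auto
qed

lemma bounded_supported_diff:
  assumes "bounded_supported R h1" "bounded_supported R h2"
  shows "bounded_supported R (\<lambda>x. h1 x - h2 x)"
proof -
  obtain N1 N2 where N: "\<And>x. \<bar>h1 x\<bar> \<le> N1" "\<And>x. \<bar>h2 x\<bar> \<le> N2"
    using assms by (auto simp: bounded_supported_def)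
  have "\<bar>h1 x - h2 x\<bar> \<le> N1 + N2" for x
    using abs_triangle_ineq4[of "h1 x" "h2 x"] N(1)[of x] N(2)[of x] by linarith
  then show ?thesis using assms unfolding bounded_supported_def by auto
qed

lemma bounded_supported_powr:
  assumes g: "bounded_supported R g" and gN: "\<And>x. 0 \<le> g x \<and> g x \<le> N" and p: "0 < p"
  shows "bounded_supported R (\<lambda>x. g x powr p)"
proof -
  have gm: "g \<in> borel_measurable lebesgue" using g by (simp add: bounded_supported_def)
  have "(\<lambda>x. g x powr p) \<in> borel_measurable lebesgue" using gm by measurable
  moreover have "\<bar>g x powr p\<bar> \<le> N powr p" for x
    using gN[of x] p by (simp add: powr_mono2)
  moreover have "g x powr p = 0" if "x \<notin> centred_cube R" for x
    using g that by (simp add: bounded_supported_def)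
  ultimately show ?thesis unfolding bounded_supported_def by blast
qed

definition dyadic_expectation :: "nat \<Rightarrow> (real^'n::finite \<Rightarrow> real) \<Rightarrow> real^'n \<Rightarrow> real" where
  "dyadic_expectation k h x = average (dyadic_cube (int k) (dyadic_index (int k) x)) h"

lemma dyadic_expectation_step:
  fixes \<phi> :: "real \<Rightarrow> real"
  assumes h: "bounded_supported R h" and \<phi>: "\<phi> 0 = 0"
  shows "\<phi> (dyadic_expectation k h x) = (\<Sum>m\<in>dyadic_grid k R.
           \<phi> (average (dyadic_cube (int k) m) h) * indicator (dyadic_cube (int k) m) x)"
proof -
  have "average (dyadic_cube (int k) m) h = 0" if "m \<notin> dyadic_grid k R" for m
  proof (rule average_eq_0)
    fix y assume "y \<in> dyadic_cube (int k) m"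
    then have "y \<notin> centred_cube R"
      using that dyadic_index_in_grid[of y R k] by (auto simp: mem_dyadic_cube_iff)
    then show "h y = 0" using h by (simp add: bounded_supported_def)
  qed
  then show ?thesis
    unfolding dyadic_expectation_def sum_dyadic_indicator[OF finite_dyadic_grid] using \<phi> by auto
qed

lemma bounded_supported_dyadic_expectation:
  assumes h: "bounded_supported R h"
  shows "bounded_supported (R + 1) (dyadic_expectation k h)"
proof -
  obtain N where N: "\<And>x. \<bar>h x\<bar> \<le> N" using h by (auto simp: bounded_supported_def)
  have "dyadic_expectation k h x = (\<Sum>m\<in>dyadic_grid k R.
          average (dyadic_cube (int k) m) h * indicator (dyadic_cube (int k) m) x)" for x
    using dyadic_expectation_step[OF h, of "\<lambda>t. t"] by simp
  then have "dyadic_expectation k h = (\<lambda>x. \<Sum>m\<in>dyadic_grid k R.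
          average (dyadic_cube (int k) m) h * indicator (dyadic_cube (int k) m) x)"
    by (rule ext)
  then have "dyadic_expectation k h \<in> borel_measurable lebesgue"
    using borel_measurable_integrable[OF integrable_dyadic_step[OF finite_dyadic_grid]] by simp
  moreover have "\<bar>dyadic_expectation k h x\<bar> \<le> N" for x
  proof -
    let ?Q = "dyadic_cube (int k) (dyadic_index (int k) x)"
    have "\<bar>average ?Q h\<bar> \<le> average ?Q (\<lambda>x. \<bar>h x\<bar>)" by (rule abs_average_le)
    also have "\<dots> \<le> N"
      using bounded_supported_set_integrable[OF bounded_supported_abs[OF h] dyadic_cube_lebesgue] N
      by (intro average_le_bound[OF dyadic_cube_lmeasurable measure_dyadic_cube_pos])
    finally show ?thesis unfolding dyadic_expectation_def .
  qed
  moreover have "dyadic_expectation k h x = 0" if "x \<notin> centred_cube (R + 1)" for x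
    unfolding dyadic_expectation_def
  proof (rule average_eq_0)
    fix y assume y: "y \<in> dyadic_cube (int k) (dyadic_index (int k) x)"
    have "y \<notin> centred_cube R"
    proof
      assume "y \<in> centred_cube R"
      with y have "dyadic_cube (int k) (dyadic_index (int k) x) \<subseteq> centred_cube (R + 1)"
        by (rule dyadic_cube_subset_centred_cube)
      with that show False using mem_dyadic_cube_index by blast
    qed
    then show "h y = 0" using h by (simp add: bounded_supported_def)
  qed
  ultimately show ?thesis unfolding bounded_supported_def by blast
qed

lemma integral_dyadic_expectation:
  assumes h: "bounded_supported R h"
  shows "(\<integral>x. dyadic_expectation k h x \<partial>lebesgue) = (\<integral>x. h x \<partial>lebesgue)"
proof -
  let ?G = "dyadic_grid k R" and ?Q = "\<lambda>m. dyadic_cube (int k) m"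
  have "(\<integral>x. dyadic_expectation k h x \<partial>lebesgue)
      = (\<integral>x. (\<Sum>m\<in>?G. average (?Q m) h * indicator (?Q m) x) \<partial>lebesgue)"
    using dyadic_expectation_step[OF h, of "\<lambda>t. t"] by simp
  also have "\<dots> = (\<Sum>m\<in>?G. average (?Q m) h * measure lebesgue (?Q m))"
    by (rule integral_dyadic_step[OF finite_dyadic_grid])
  also have "\<dots> = (\<Sum>m\<in>?G. (\<integral>x. indicator (?Q m) x * h x \<partial>lebesgue))"
    by (simp add: average_mult_measure measure_dyadic_cube_pos set_lebesgue_integral_def)
  also have "\<dots> = (\<integral>x. (\<Sum>m\<in>?G. indicator (?Q m) x * h x) \<partial>lebesgue)"
    using bounded_supported_set_integrable[OF h dyadic_cube_lebesgue]
    by (intro Bochner_Integration.integral_sum[symmetric]) (simp add: set_integrable_def)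
  also have "\<dots> = (\<integral>x. h x \<partial>lebesgue)"
  proof (rule Bochner_Integration.integral_cong[OF refl])
    fix x
    have "(\<Sum>m\<in>?G. indicator (?Q m) x * h x) = (\<Sum>m\<in>?G. 1 * indicator (?Q m) x) * h x"
      by (simp add: sum_distrib_right)
    also have "\<dots> = h x"
      unfolding sum_dyadic_indicator[OF finite_dyadic_grid]
      using dyadic_index_in_grid[of x R k] h by (auto simp: bounded_supported_def)
    finally show "(\<Sum>m\<in>?G. indicator (?Q m) x * h x) = h x" .
  qed
  finally show ?thesis .
qed

lemma integral_abs_dyadic_expectation_le:
  assumes h: "bounded_supported R h"
  shows "(\<integral>x. \<bar>dyadic_expectation k h x\<bar> \<partial>lebesgue) \<le> (\<integral>x. \<bar>h x\<bar> \<partial>lebesgue)"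
proof -
  have h': "bounded_supported R (\<lambda>x. \<bar>h x\<bar>)" by (rule bounded_supported_abs[OF h])
  note int_E = bounded_supported_integrable[OF bounded_supported_dyadic_expectation]
  have "(\<integral>x. \<bar>dyadic_expectation k h x\<bar> \<partial>lebesgue) \<le> (\<integral>x. dyadic_expectation k (\<lambda>x. \<bar>h x\<bar>) x \<partial>lebesgue)"
    using integrable_abs[OF int_E[OF h]] int_E[OF h']
    by (rule integral_mono) (simp add: dyadic_expectation_def abs_average_le)
  also have "\<dots> = (\<integral>x. \<bar>h x\<bar> \<partial>lebesgue)" by (rule integral_dyadic_expectation[OF h'])
  finally show ?thesis .
qed

lemma dyadic_expectation_diff:
  assumes "bounded_supported R h1" "bounded_supported R h2"
  shows "dyadic_expectation k (\<lambda>x. h1 x - h2 x) x = dyadic_expectation k h1 x - dyadic_expectation k h2 x"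
  unfolding dyadic_expectation_def
  by (intro average_diff bounded_supported_set_integrable[OF assms(1) dyadic_cube_lebesgue]
      bounded_supported_set_integrable[OF assms(2) dyadic_cube_lebesgue])

lemma dyadic_expectation_sum:
  assumes "finite J" "\<And>j. j \<in> J \<Longrightarrow> bounded_supported R (h j)"
  shows "dyadic_expectation k (\<lambda>x. \<Sum>j\<in>J. c j * h j x) x = (\<Sum>j\<in>J. c j * dyadic_expectation k (h j) x)"
  unfolding dyadic_expectation_def
  by (intro average_sum assms(1) bounded_supported_set_integrable[OF assms(2) dyadic_cube_lebesgue])

section \<open>\<open>L\<^sup>1\<close> convergence of dyadic expectations\<close>

definition dyadic_L1_error :: "nat \<Rightarrow> (real^'n::finite \<Rightarrow> real) \<Rightarrow> real" where
  "dyadic_L1_error k h = (\<integral>x. \<bar>h x - dyadic_expectation k h x\<bar> \<partial>lebesgue)"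

lemma dyadic_L1_error_nonneg: "0 \<le> dyadic_L1_error k h"
  unfolding dyadic_L1_error_def by (rule integral_nonneg_AE) simp

lemma integrable_dyadic_L1_error:
  assumes h: "bounded_supported R h"
  shows "integrable lebesgue (\<lambda>x. \<bar>h x - dyadic_expectation k h x\<bar>)"
proof -
  have "bounded_supported (R + 1) h" by (rule bounded_supported_mono[OF h]) simp
  then have "bounded_supported (R + 1) (\<lambda>x. h x - dyadic_expectation k h x)"
    using bounded_supported_dyadic_expectation[OF h] by (rule bounded_supported_diff)
  then show ?thesis by (rule bounded_supported_integrable[OF bounded_supported_abs])
qed

lemma dyadic_L1_error_le:
  assumes h: "bounded_supported R h" and s: "bounded_supported R s"
  shows "dyadic_L1_error k h \<le> 2 * (\<integral>x. \<bar>h x - s x\<bar> \<partial>lebesgue) + dyadic_L1_error k s"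
proof -
  let ?E = "dyadic_expectation k"
  have sh: "bounded_supported R (\<lambda>x. s x - h x)" by (rule bounded_supported_diff[OF s h])
  have i1: "integrable lebesgue (\<lambda>x. \<bar>h x - s x\<bar>)"
    by (rule bounded_supported_integrable[OF bounded_supported_abs[OF bounded_supported_diff[OF h s]]])
  have i2: "integrable lebesgue (\<lambda>x. \<bar>?E (\<lambda>x. s x - h x) x\<bar>)"
    by (rule bounded_supported_integrable[OF bounded_supported_abs[OF bounded_supported_dyadic_expectation[OF sh]]])
  have "\<bar>h x - ?E h x\<bar> \<le> \<bar>h x - s x\<bar> + \<bar>s x - ?E s x\<bar> + \<bar>?E (\<lambda>x. s x - h x) x\<bar>" for x
    using dyadic_expectation_diff[OF s h, of k x] by linarith
  then have "dyadic_L1_error k h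
      \<le> (\<integral>x. \<bar>h x - s x\<bar> + \<bar>s x - ?E s x\<bar> + \<bar>?E (\<lambda>x. s x - h x) x\<bar> \<partial>lebesgue)"
    unfolding dyadic_L1_error_def using integrable_dyadic_L1_error[OF h] i1 i2 integrable_dyadic_L1_error[OF s]
    by (intro integral_mono Bochner_Integration.integrable_add) auto
  also have "\<dots> = (\<integral>x. \<bar>h x - s x\<bar> \<partial>lebesgue) + dyadic_L1_error k s
      + (\<integral>x. \<bar>?E (\<lambda>x. s x - h x) x\<bar> \<partial>lebesgue)"
    unfolding dyadic_L1_error_def using i1 i2 integrable_dyadic_L1_error[OF s] by simp
  also have "(\<integral>x. \<bar>?E (\<lambda>x. s x - h x) x\<bar> \<partial>lebesgue) \<le> (\<integral>x. \<bar>h x - s x\<bar> \<partial>lebesgue)"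
    using integral_abs_dyadic_expectation_le[OF sh] by (simp add: abs_minus_commute)
  finally show ?thesis by simp
qed

lemma eventually_dyadic_cube_subset_ball:
  fixes x :: "real^'n::finite"
  assumes "0 < r"
  shows "eventually (\<lambda>k. dyadic_cube (int k) (dyadic_index (int k) x) \<subseteq> ball x r) sequentially"
proof -
  have "(\<lambda>k. real CARD('n) * inverse (2 ^ k)) \<longlonglongrightarrow> real CARD('n) * 0"
    by (intro tendsto_mult tendsto_const LIMSEQ_inverse_realpow_zero) simp
  then have "eventually (\<lambda>k. real CARD('n) * inverse (2 ^ k) < r) sequentially"
    using assms by (intro order_tendstoD(2)) auto
  then show ?thesis
  proof (rule eventually_mono, intro subsetI)
    fix k :: nat and y
    assume k: "real CARD('n) * inverse (2 ^ k) < r"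
      and y: "y \<in> dyadic_cube (int k) (dyadic_index (int k) x)"
    have "2 powr (- real_of_int (int k)) = inverse (2 ^ k)"
      by (simp add: powr_minus powr_realpow)
    then have "\<bar>(x - y) $ i\<bar> < inverse (2 ^ k)" for i
      using dyadic_cube_component_dist[OF mem_dyadic_cube_index y] by simp
    then have "dist x y < real CARD('n) * inverse (2 ^ k)"
      using norm_le_l1_cart[of "x - y"] sum_strict_mono[of UNIV "\<lambda>i. \<bar>(x - y) $ i\<bar>" "\<lambda>_. inverse (2 ^ k)"]
      by (simp add: dist_norm)
    with k show "y \<in> ball x r" by simp
  qed
qed

lemma dyadic_L1_error_indicator:
  fixes S :: "(real^'n::finite) set"
  assumes S: "S \<in> sets lebesgue" "S \<subseteq> centred_cube R"
  shows "dyadic_L1_error k (indicator S)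
           = 2 * (\<integral>x. indicator S x * (1 - dyadic_expectation k (indicator S) x) \<partial>lebesgue)"
proof -
  let ?e = "dyadic_expectation k (indicator S)"
  have Sl: "S \<in> lmeasurable" by (rule fmeasurableI2[OF centred_cube_lmeasurable S(2,1)])
  have hS: "bounded_supported R (indicator S)" by (rule bounded_supported_indicator[OF S])
  have e01: "0 \<le> ?e x \<and> ?e x \<le> 1" for x
    unfolding dyadic_expectation_def using average_indicator_bounds[OF dyadic_cube_lmeasurable S(1)] by auto
  have ie: "integrable lebesgue ?e"
    by (rule bounded_supported_integrable[OF bounded_supported_dyadic_expectation[OF hS]])
  have iS: "integrable lebesgue (indicator S :: _ \<Rightarrow> real)" by (rule integrable_indicator_lmeasurable[OF Sl])
  have iSe: "integrable lebesgue (\<lambda>x. indicator S x * ?e x)"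
    using integrable_mult_indicator[OF S(1) ie] by simp
  have "(\<integral>x. ?e x \<partial>lebesgue) = measure lebesgue S"
    using integral_dyadic_expectation[OF hS] by (simp add: integral_indicator)
  moreover have "\<bar>indicator S x - ?e x\<bar> = indicator S x + ?e x - 2 * (indicator S x * ?e x)" for x
    using e01[of x] by (auto simp: indicator_def)
  ultimately show ?thesis
    unfolding dyadic_L1_error_def using iS ie iSe
    by (simp add: integral_indicator right_diff_distrib)
qed

lemma dyadic_L1_error_open_tendsto:
  fixes U :: "(real^'n::finite) set"
  assumes U: "open U" "U \<subseteq> centred_cube R"
  shows "(\<lambda>k. dyadic_L1_error k (indicator U)) \<longlonglongrightarrow> 0"
proof -
  have Us: "U \<in> sets lebesgue" using U(1) by (intro sets_completionI_sets) (simp add: borel_open)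
  have Ul: "U \<in> lmeasurable" by (rule fmeasurableI2[OF centred_cube_lmeasurable U(2) Us])
  define e where "e k = dyadic_expectation k (indicator U)" for k
  have e01: "0 \<le> e k x \<and> e k x \<le> 1" for k x
    unfolding e_def dyadic_expectation_def using average_indicator_bounds[OF dyadic_cube_lmeasurable Us] by auto
  have "(\<lambda>k. \<integral>x. indicator U x * (1 - e k x) \<partial>lebesgue) \<longlonglongrightarrow> (\<integral>x. 0 \<partial>(lebesgue :: (real^'n) measure))"
  proof (rule integral_dominated_convergence[where w = "indicator U"])
    have "e k \<in> borel_measurable lebesgue" for k
      using bounded_supported_dyadic_expectation[OF bounded_supported_indicator[OF Us U(2)], of k]
      by (simp add: e_def bounded_supported_def)
    then show "(\<lambda>x. indicator U x * (1 - e k x)) \<in> borel_measurable lebesgue" for k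
      using Us by measurable
    show "AE x in lebesgue. norm (indicator U x * (1 - e k x)) \<le> indicator U x" for k
      using e01 by (auto simp: indicator_def)
    show "AE x in lebesgue. (\<lambda>k. indicator U x * (1 - e k x)) \<longlonglongrightarrow> 0"
    proof (rule AE_I2)
      fix x
      show "(\<lambda>k. indicator U x * (1 - e k x)) \<longlonglongrightarrow> 0"
      proof (cases "x \<in> U")
        case True
        then obtain r where r: "0 < r" "ball x r \<subseteq> U" using U(1) open_contains_ball by blast
        have "eventually (\<lambda>k. indicator U x * (1 - e k x) = 0) sequentially"
          using eventually_dyadic_cube_subset_ball[OF r(1)]
        proof (rule eventually_mono)
          fix k assume "dyadic_cube (int k) (dyadic_index (int k) x) \<subseteq> ball x r"
          then have "e k x = 1"
            unfolding e_def dyadic_expectation_def using r(2)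
            by (intro average_indicator_superset measure_dyadic_cube_pos) auto
          then show "indicator U x * (1 - e k x) = 0" by simp
        qed
        then show ?thesis by (rule tendsto_eventually)
      qed simp
    qed
  qed (use Ul in \<open>simp_all add: integrable_indicator_lmeasurable\<close>)
  from tendsto_mult[OF tendsto_const this, of 2]
  show ?thesis by (simp add: dyadic_L1_error_indicator[OF Us U(2)] e_def)
qed

lemma lebesgue_outer_open_centred_cube:
  fixes A :: "(real^'n::finite) set"
  assumes A: "A \<in> sets lebesgue" "A \<subseteq> centred_cube R" and e: "0 < \<epsilon>"
  obtains U where "open U" "A \<subseteq> U" "U \<subseteq> centred_cube (R + 1)" "measure lebesgue (U - A) < \<epsilon>"
proof -
  obtain U where U: "open U" "A \<subseteq> U" "U - A \<in> lmeasurable" "emeasure lebesgue (U - A) < ennreal \<epsilon>"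
    using sets_lebesgue_outer_open[OF A(1) e] by blast
  define W where "W = box (- (\<chi> i. R + 1)) (\<chi> i::'n. R + 1)"
  have "centred_cube R \<subseteq> W"
  proof
    fix x :: "real^'n" assume "x \<in> centred_cube R"
    then have "\<bar>x $ i\<bar> \<le> R" for i by (simp add: centred_cube_def)
    then have "- (R + 1) < x $ i \<and> x $ i < R + 1" for i
      using abs_le_iff[of "x $ i" R] by fastforce
    then show "x \<in> W" by (simp add: W_def mem_box_cart)
  qed
  moreover have "W \<subseteq> centred_cube (R + 1)"
    unfolding W_def centred_cube_eq_cbox by (rule box_subset_cbox)
  moreover have "U \<inter> W - A \<in> lmeasurable"
    by (rule fmeasurableI2[OF U(3)]) (use A(1) U(1) in \<open>auto simp: W_def borel_open sets_completionI_sets\<close>)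
  then have "measure lebesgue (U \<inter> W - A) \<le> measure lebesgue (U - A)"
    using U(3) by (intro measure_mono_fmeasurable) (auto simp: fmeasurable_def)
  moreover have "measure lebesgue (U - A) < \<epsilon>"
    using U(4) emeasure_eq_measure2[OF U(3)] e by (simp add: ennreal_less_iff)
  ultimately show ?thesis
    using that[of "U \<inter> W"] U(1,2) A(2) by (auto simp: W_def)
qed

lemma dyadic_L1_error_measurable_tendsto:
  fixes A :: "(real^'n::finite) set"
  assumes A: "A \<in> sets lebesgue" "A \<subseteq> centred_cube R"
  shows "(\<lambda>k. dyadic_L1_error k (indicator A)) \<longlonglongrightarrow> 0"
  unfolding tendsto_zero_nonneg_iff_eventually_less[OF dyadic_L1_error_nonneg]
proof (intro allI impI)
  fix \<epsilon> :: real assume "0 < \<epsilon>"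
  then obtain U where U: "open U" "A \<subseteq> U" "U \<subseteq> centred_cube (R + 1)"
    and small: "measure lebesgue (U - A) < \<epsilon> / 4"
    using lebesgue_outer_open_centred_cube[OF A, of "\<epsilon> / 4"] by auto
  have Us: "U \<in> sets lebesgue" using U(1) by (intro sets_completionI_sets) (simp add: borel_open)
  have "(\<lambda>x. \<bar>indicator A x - indicator U x\<bar>) = (indicator (U - A) :: _ \<Rightarrow> real)"
    using U(2) by (auto simp: indicator_def fun_eq_iff)
  moreover have "U - A \<in> lmeasurable"
    by (rule fmeasurableI2[OF centred_cube_lmeasurable[of "R + 1"]]) (use U(3) Us A(1) in auto)
  ultimately have diff: "(\<integral>x. \<bar>indicator A x - indicator U x\<bar> \<partial>lebesgue) < \<epsilon> / 4"
    using small by (simp add: integral_indicator fmeasurable_def)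
  have hA: "bounded_supported (R + 1) (indicator A)"
    using A centred_cube_mono[of R "R + 1"] by (intro bounded_supported_indicator) auto
  have hU: "bounded_supported (R + 1) (indicator U)" by (rule bounded_supported_indicator[OF Us U(3)])
  have "eventually (\<lambda>k. dyadic_L1_error k (indicator U) < \<epsilon> / 2) sequentially"
    using dyadic_L1_error_open_tendsto[OF U(1,3)] \<open>0 < \<epsilon>\<close> by (intro order_tendstoD(2)) auto
  then show "eventually (\<lambda>k. dyadic_L1_error k (indicator A) < \<epsilon>) sequentially"
  proof (rule eventually_mono)
    fix k assume "dyadic_L1_error k (indicator U) < \<epsilon> / 2"
    then show "dyadic_L1_error k (indicator A) < \<epsilon>"
      using dyadic_L1_error_le[OF hA hU, of k] diff by linarith
  qed
qed

lemma dyadic_L1_error_step_tendsto: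
  fixes B :: "'j \<Rightarrow> (real^'n::finite) set"
  assumes J: "finite J" and B: "\<And>j. j \<in> J \<Longrightarrow> B j \<in> sets lebesgue \<and> B j \<subseteq> centred_cube R"
  shows "(\<lambda>k. dyadic_L1_error k (\<lambda>x. \<Sum>j\<in>J. c j * indicator (B j) x)) \<longlonglongrightarrow> 0"
proof (rule Lim_null_comparison)
  let ?s = "\<lambda>x. \<Sum>j\<in>J. c j * indicator (B j) x" and ?E = "dyadic_expectation"
  have hB: "\<And>j. j \<in> J \<Longrightarrow> bounded_supported R (indicator (B j))"
    using B by (intro bounded_supported_indicator) auto
  show "(\<lambda>k. \<Sum>j\<in>J. \<bar>c j\<bar> * dyadic_L1_error k (indicator (B j))) \<longlonglongrightarrow> 0"
    using B by (intro tendsto_null_sum tendsto_mult_right_zero dyadic_L1_error_measurable_tendsto) auto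
  show "eventually (\<lambda>k. norm (dyadic_L1_error k ?s) \<le> (\<Sum>j\<in>J. \<bar>c j\<bar> * dyadic_L1_error k (indicator (B j)))) sequentially"
  proof (intro always_eventually allI)
    fix k
    have "\<bar>?s x - ?E k ?s x\<bar> \<le> (\<Sum>j\<in>J. \<bar>c j\<bar> * \<bar>indicator (B j) x - ?E k (indicator (B j)) x\<bar>)" for x
    proof -
      have "\<bar>?s x - ?E k ?s x\<bar> = \<bar>\<Sum>j\<in>J. c j * (indicator (B j) x - ?E k (indicator (B j)) x)\<bar>"
        using dyadic_expectation_sum[OF J hB, where k = k and c = c and x = x] by (simp add: sum_subtractf right_diff_distrib)
      also have "\<dots> \<le> (\<Sum>j\<in>J. \<bar>c j * (indicator (B j) x - ?E k (indicator (B j)) x)\<bar>)"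
        by (rule sum_abs)
      finally show ?thesis by (simp add: abs_mult)
    qed
    then have "dyadic_L1_error k ?s
        \<le> (\<integral>x. (\<Sum>j\<in>J. \<bar>c j\<bar> * \<bar>indicator (B j) x - ?E k (indicator (B j)) x\<bar>) \<partial>lebesgue)"
      unfolding dyadic_L1_error_def
      using integrable_dyadic_L1_error[OF bounded_supported_sum[OF J hB]] integrable_dyadic_L1_error[OF hB]
      by (intro integral_mono Bochner_Integration.integrable_sum integrable_mult_right) auto
    also have "\<dots> = (\<Sum>j\<in>J. \<bar>c j\<bar> * dyadic_L1_error k (indicator (B j)))"
      unfolding dyadic_L1_error_def using integrable_dyadic_L1_error[OF hB]
      by (subst Bochner_Integration.integral_sum) auto
    finally show "norm (dyadic_L1_error k ?s) \<le> (\<Sum>j\<in>J. \<bar>c j\<bar> * dyadic_L1_error k (indicator (B j)))"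
      using dyadic_L1_error_nonneg[of k ?s] by simp
  qed
qed

lemma bounded_supported_uniform_step_approx:
  fixes g :: "real^'n::finite \<Rightarrow> real" and L :: nat
  assumes g: "bounded_supported R g" and N: "\<And>x. \<bar>g x\<bar> \<le> N" "0 < N" and L0: "0 < L"
  obtains B :: "int \<Rightarrow> (real^'n) set" and c :: "int \<Rightarrow> real"
  where "\<And>j. B j \<in> sets lebesgue \<and> B j \<subseteq> centred_cube R"
    "\<And>x. \<bar>g x - (\<Sum>j\<in>{- int L..int L}. c j * indicator (B j) x)\<bar> \<le> N / L * indicator (centred_cube R) x"
proof -
  let ?T = "centred_cube R :: (real^'n) set" and ?J = "{- int L..int L}"
  define t where "t x = g x * L / N" for x
  define B where "B j = {x \<in> ?T. real_of_int j \<le> t x \<and> t x < real_of_int j + 1}" for j :: int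
  define c where "c j = real_of_int j * N / L" for j :: int
  have gm: "g \<in> borel_measurable lebesgue" using g by (simp add: bounded_supported_def)
  have B: "B j \<in> sets lebesgue \<and> B j \<subseteq> ?T" for j
  proof
    have "B j = ?T \<inter> {x \<in> space lebesgue. real_of_int j \<le> t x \<and> t x < real_of_int j + 1}"
      by (auto simp: B_def)
    also have "\<dots> \<in> sets lebesgue"
      using fmeasurableD[OF centred_cube_lmeasurable] gm unfolding t_def by measurable
    finally show "B j \<in> sets lebesgue" .
  qed (auto simp: B_def)
  have "\<bar>g x - (\<Sum>j\<in>?J. c j * indicator (B j) x)\<bar> \<le> N / L * indicator ?T x" for x
  proof (cases "x \<in> ?T")
    case True
    note floor = floor_quantize[OF N(1)[of x] N(2) L0, folded t_def]
    have "c j * indicator (B j) x = (if j = \<lfloor>t x\<rfloor> then c j else 0)" for j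
      using True by (auto simp: B_def indicator_def floor_eq_iff dest: floor_unique)
    then have "(\<Sum>j\<in>?J. c j * indicator (B j) x) = c \<lfloor>t x\<rfloor>"
      using floor(1) by (simp add: sum.delta)
    then have "\<bar>g x - (\<Sum>j\<in>?J. c j * indicator (B j) x)\<bar> \<le> N / L"
      using floor(2) by (simp add: c_def)
    then show ?thesis using True by simp
  next
    case False
    then have "g x = 0" using g by (simp add: bounded_supported_def)
    moreover have "(\<Sum>j\<in>?J. c j * indicator (B j) x) = 0"
      using False B by (intro sum.neutral) (auto simp: indicator_def)
    ultimately show ?thesis using False by simp
  qed
  with B show ?thesis by (rule that)
qed

lemma bounded_supported_step_approx:
  fixes g :: "real^'n::finite \<Rightarrow> real"
  assumes g: "bounded_supported R g" and \<delta>: "0 < \<delta>"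
  obtains J :: "int set" and B :: "int \<Rightarrow> (real^'n) set" and c :: "int \<Rightarrow> real"
  where "finite J" "\<And>j. j \<in> J \<Longrightarrow> B j \<in> sets lebesgue \<and> B j \<subseteq> centred_cube R"
    "(\<integral>x. \<bar>g x - (\<Sum>j\<in>J. c j * indicator (B j) x)\<bar> \<partial>lebesgue) < \<delta>"
proof -
  let ?T = "centred_cube R :: (real^'n) set"
  obtain N0 where N0: "\<And>x. \<bar>g x\<bar> \<le> N0" using g by (auto simp: bounded_supported_def)
  define N where "N = N0 + 1"
  have "0 \<le> N0" using N0[of undefined] by (meson abs_ge_zero order_trans)
  then have N: "\<bar>g x\<bar> \<le> N" "0 < N" for x
    using N0[of x] unfolding N_def by linarith+
  obtain L :: nat where L: "N * measure lebesgue ?T / \<delta> < L" using reals_Archimedean2 by blast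
  have "0 \<le> N * measure lebesgue ?T / \<delta>" using N(2) \<delta> by simp
  with L have L0: "0 < L" by linarith
  show ?thesis
  proof (rule bounded_supported_uniform_step_approx[OF g N L0])
    fix B c
    assume B: "\<And>j. B j \<in> sets lebesgue \<and> B j \<subseteq> ?T"
      and pointwise: "\<And>x. \<bar>g x - (\<Sum>j\<in>{- int L..int L}. c j * indicator (B j) x)\<bar> \<le> N / L * indicator ?T x"
    let ?s = "\<lambda>x. \<Sum>j\<in>{- int L..int L}. c j * indicator (B j) x"
    have "(\<integral>x. \<bar>g x - ?s x\<bar> \<partial>lebesgue) \<le> (\<integral>x. N / L * indicator ?T x \<partial>lebesgue)"
    proof (rule integral_mono)
      have "bounded_supported R ?s"
        using B by (intro bounded_supported_sum bounded_supported_indicator) auto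
      then show "integrable lebesgue (\<lambda>x. \<bar>g x - ?s x\<bar>)"
        by (rule bounded_supported_integrable[OF bounded_supported_abs[OF bounded_supported_diff[OF g]]])
      show "integrable lebesgue (\<lambda>x. N / L * indicator ?T x)"
        by (intro integrable_mult_right integrable_indicator_lmeasurable centred_cube_lmeasurable)
    qed (rule pointwise)
    also have "\<dots> = N / L * measure lebesgue ?T" by (simp add: integral_indicator)
    also have "\<dots> < \<delta>" using L L0 \<delta> by (simp add: field_simps)
    finally show ?thesis using that[of "{- int L..int L}" B c] B by simp
  qed
qed

lemma dyadic_L1_error_tendsto_zero:
  assumes g: "bounded_supported R g"
  shows "(\<lambda>k. dyadic_L1_error k g) \<longlonglongrightarrow> 0"
  unfolding tendsto_zero_nonneg_iff_eventually_less[OF dyadic_L1_error_nonneg]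
proof (intro allI impI)
  fix \<epsilon> :: real assume "0 < \<epsilon>"
  then have e: "0 < \<epsilon> / 4" by simp
  show "eventually (\<lambda>k. dyadic_L1_error k g < \<epsilon>) sequentially"
  proof (rule bounded_supported_step_approx[OF g e])
    fix J B c
    assume J: "finite J" and B: "\<And>j. j \<in> J \<Longrightarrow> B j \<in> sets lebesgue \<and> B j \<subseteq> centred_cube R"
      and approx: "(\<integral>x. \<bar>g x - (\<Sum>j\<in>J. c j * indicator (B j) x)\<bar> \<partial>lebesgue) < \<epsilon> / 4"
    let ?s = "\<lambda>x. \<Sum>j\<in>J. c j * indicator (B j) x"
    have s: "bounded_supported R ?s"
      using B by (intro bounded_supported_sum[OF J] bounded_supported_indicator) auto
    have "eventually (\<lambda>k. dyadic_L1_error k ?s < \<epsilon> / 2) sequentially"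
      using dyadic_L1_error_step_tendsto[where B = B and c = c, OF J B] e
      by (intro order_tendstoD(2)) auto
    then show "eventually (\<lambda>k. dyadic_L1_error k g < \<epsilon>) sequentially"
    proof (rule eventually_mono)
      fix k assume "dyadic_L1_error k ?s < \<epsilon> / 2"
      then show "dyadic_L1_error k g < \<epsilon>"
        using dyadic_L1_error_le[OF g s, of k] approx by linarith
    qed
  qed
qed

section \<open>Functions of finite sparse norm are in \<open>L\<^sup>p\<close>\<close>

lemma loc_integrable_measurable:
  fixes f :: "real^'n::finite \<Rightarrow> real"
  assumes f: "loc_integrable f"
  shows "f \<in> borel_measurable lebesgue"
proof (rule borel_measurable_LIMSEQ_real[where u = "\<lambda>n x. indicator (centred_cube (real n)) x * f x"])
  fix n :: nat
  have "set_integrable lebesgue (centred_cube (real n)) f"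
    using f compact_centred_cube unfolding loc_integrable_def by blast
  then show "(\<lambda>x. indicator (centred_cube (real n)) x * f x) \<in> borel_measurable lebesgue"
    unfolding set_integrable_def by (simp add: borel_measurable_integrable)
next
  fix x :: "real^'n"
  obtain n0 :: nat where "norm x \<le> real n0" using real_arch_simple by blast
  then have "eventually (\<lambda>n. indicator (centred_cube (real n)) x * f x = f x) sequentially"
    unfolding eventually_sequentially
    by (metis norm_le_imp_mem_centred_cube indicator_simps(1) mult_1 of_nat_mono order_trans)
  then show "(\<lambda>n. indicator (centred_cube (real n)) x * f x) \<longlonglongrightarrow> f x"
    by (rule tendsto_eventually)
qed

lemma loc_integrable_set_integrable_dyadic_cube:
  "loc_integrable f \<Longrightarrow> set_integrable lebesgue (dyadic_cube k m) f"
  unfolding loc_integrable_def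
  by (rule set_integrable_subset[OF _ dyadic_cube_lebesgue dyadic_cube_subset_cbox]) simp

lemma sr_sum_le_sr_norm_p: "sparse Q I \<Longrightarrow> sr_sum p f Q I \<le> sr_norm_p p f"
  unfolding sr_norm_p_def by (rule SUP_upper2[of "(Q, I)"]) auto

lemma sum_dyadic_level_le_sr_norm_p:
  fixes f :: "real^'n::finite \<Rightarrow> real" and F :: "('n \<Rightarrow> int) set"
  assumes p: "1 < p" and F: "finite F"
  shows "ennreal (\<Sum>m\<in>F. measure lebesgue (dyadic_cube k m) * average (dyadic_cube k m) (\<lambda>x. \<bar>f x\<bar>) powr p)
           \<le> sr_norm_p p f"
proof -
  obtain h where h: "bij_betw h {..<card F} F" using bij_betw_from_nat_into_finite[OF F] by blast
  define Q where "Q i = dyadic_cube k (h i)" for i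
  \<comment> \<open>Distinct cubes of one generation are disjoint, so they form a sparse family with \<open>E = Q\<close>.\<close>
  have "sparse Q {..<card F}"
    unfolding sparse_def
  proof (intro conjI exI[of _ Q] ballI)
    show "disjoint_family_on Q {..<card F}"
      unfolding disjoint_family_on_def Q_def using h
      by (auto simp: bij_betw_def inj_on_def intro!: dyadic_cube_disjoint)
  qed (auto simp: Q_def dyadic_cubes_def dyadic_cube_lebesgue)
  then have "sr_sum p f Q {..<card F} \<le> sr_norm_p p f" by (rule sr_sum_le_sr_norm_p)
  moreover have "sr_sum p f Q {..<card F} = (\<Sum>i<card F.
      ennreal ((measure lebesgue (Q i) powr (- 1 / dual_exp p) * (LINT x:Q i|lebesgue. \<bar>f x\<bar>)) powr p))"
    unfolding sr_sum_def by (subst suminf_finite[of "{..<card F}"]) auto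
  then have "sr_sum p f Q {..<card F}
      = ennreal (\<Sum>i<card F. measure lebesgue (Q i) * average (Q i) (\<lambda>x. \<bar>f x\<bar>) powr p)"
    unfolding Q_def sr_term_eq_average[OF p measure_dyadic_cube_pos] by (simp add: sum_ennreal)
  moreover have "(\<Sum>i<card F. measure lebesgue (Q i) * average (Q i) (\<lambda>x. \<bar>f x\<bar>) powr p)
      = (\<Sum>m\<in>F. measure lebesgue (dyadic_cube k m) * average (dyadic_cube k m) (\<lambda>x. \<bar>f x\<bar>) powr p)"
    unfolding Q_def by (rule sum.reindex_bij_betw[OF h])
  ultimately show ?thesis by simp
qed

lemma integral_dyadic_expectation_powr_le_sr_norm_p:
  fixes f g :: "real^'n::finite \<Rightarrow> real"
  assumes p: "1 < p" and f: "loc_integrable f"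
    and g: "bounded_supported R g" and gf: "\<And>x. 0 \<le> g x \<and> g x \<le> \<bar>f x\<bar>"
  shows "ennreal (\<integral>x. dyadic_expectation k g x powr p \<partial>lebesgue) \<le> sr_norm_p p f"
proof -
  let ?Q = "\<lambda>m. dyadic_cube (int k) m"
  have "(\<integral>x. dyadic_expectation k g x powr p \<partial>lebesgue)
      = (\<integral>x. (\<Sum>m\<in>dyadic_grid k R. average (?Q m) g powr p * indicator (?Q m) x) \<partial>lebesgue)"
    using dyadic_expectation_step[OF g, of "\<lambda>t. t powr p"] by simp
  also have "\<dots> = (\<Sum>m\<in>dyadic_grid k R. average (?Q m) g powr p * measure lebesgue (?Q m))"
    by (rule integral_dyadic_step[OF finite_dyadic_grid])
  also have "\<dots> \<le> (\<Sum>m\<in>dyadic_grid k R. measure lebesgue (?Q m) * average (?Q m) (\<lambda>x. \<bar>f x\<bar>) powr p)"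
  proof (rule sum_mono)
    fix m
    have "(LINT x:?Q m|lebesgue. g x) \<le> (LINT x:?Q m|lebesgue. \<bar>f x\<bar>)"
      using bounded_supported_set_integrable[OF g dyadic_cube_lebesgue]
        set_integrable_abs[OF loc_integrable_set_integrable_dyadic_cube[OF f]]
      by (rule set_integral_mono) (use gf in auto)
    then have "average (?Q m) g \<le> average (?Q m) (\<lambda>x. \<bar>f x\<bar>)"
      unfolding average_def by (rule divide_right_mono) simp
    then have "average (?Q m) g powr p \<le> average (?Q m) (\<lambda>x. \<bar>f x\<bar>) powr p"
      using gf p by (intro powr_mono2 average_nonneg) auto
    then show "average (?Q m) g powr p * measure lebesgue (?Q m)
        \<le> measure lebesgue (?Q m) * average (?Q m) (\<lambda>x. \<bar>f x\<bar>) powr p"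
      by (simp add: mult.commute mult_left_mono)
  qed
  finally have "ennreal (\<integral>x. dyadic_expectation k g x powr p \<partial>lebesgue) \<le> ennreal (\<Sum>m\<in>dyadic_grid k R.
      measure lebesgue (?Q m) * average (?Q m) (\<lambda>x. \<bar>f x\<bar>) powr p)"
    by (rule ennreal_leI)
  also have "\<dots> \<le> sr_norm_p p f" by (rule sum_dyadic_level_le_sr_norm_p[OF p finite_dyadic_grid])
  finally show ?thesis .
qed

lemma integral_powr_le_dyadic_expectation:
  fixes g :: "real^'n::finite \<Rightarrow> real"
  assumes p: "1 < p" and g: "bounded_supported R g" and gN: "\<And>x. 0 \<le> g x \<and> g x \<le> N"
  shows "(\<integral>x. g x powr p \<partial>lebesgue)
           \<le> (\<integral>x. dyadic_expectation k g x powr p \<partial>lebesgue) + p * N powr (p - 1) * dyadic_L1_error k g"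
proof -
  let ?E = "dyadic_expectation k g" and ?C = "p * N powr (p - 1)"
  have pointwise: "g x powr p \<le> ?E x powr p + ?C * \<bar>g x - ?E x\<bar>" for x
  proof -
    have E0: "0 \<le> ?E x" unfolding dyadic_expectation_def using gN by (intro average_nonneg) auto
    have "p * g x powr (p - 1) * (g x - ?E x) \<le> p * g x powr (p - 1) * \<bar>g x - ?E x\<bar>"
      using p by (intro mult_left_mono) auto
    also have "\<dots> \<le> ?C * \<bar>g x - ?E x\<bar>"
      using gN[of x] p by (intro mult_right_mono mult_left_mono powr_mono2) auto
    finally show ?thesis using powr_tangent_le[OF p _ E0, of "g x"] gN[of x] by linarith
  qed
  have int_Ep: "integrable lebesgue (\<lambda>x. ?E x powr p)"
    using integrable_dyadic_step[OF finite_dyadic_grid, where c = "\<lambda>m. average (dyadic_cube (int k) m) g powr p"]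
      dyadic_expectation_step[OF g, of "\<lambda>t. t powr p"] by simp
  have "(\<integral>x. g x powr p \<partial>lebesgue) \<le> (\<integral>x. ?E x powr p + ?C * \<bar>g x - ?E x\<bar> \<partial>lebesgue)"
    using bounded_supported_integrable[OF bounded_supported_powr[OF g gN]] p int_Ep
      integrable_dyadic_L1_error[OF g] pointwise by (intro integral_mono) auto
  also have "\<dots> = (\<integral>x. ?E x powr p \<partial>lebesgue) + ?C * dyadic_L1_error k g"
    unfolding dyadic_L1_error_def using int_Ep integrable_dyadic_L1_error[OF g] by simp
  finally show ?thesis .
qed

lemma integral_powr_le_sr_norm_p:
  fixes f g :: "real^'n::finite \<Rightarrow> real"
  assumes p: "1 < p" and f: "loc_integrable f" and g: "bounded_supported R g"
    and gf: "\<And>x. 0 \<le> g x \<and> g x \<le> \<bar>f x\<bar>" and gN: "\<And>x. g x \<le> N"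
  shows "ennreal (\<integral>x. g x powr p \<partial>lebesgue) \<le> sr_norm_p p f"
proof (rule LIMSEQ_le_const)
  let ?err = "\<lambda>k. p * N powr (p - 1) * dyadic_L1_error k g"
  have "(\<lambda>k. ennreal (?err k)) \<longlonglongrightarrow> ennreal 0"
    using dyadic_L1_error_tendsto_zero[OF g] by (intro tendsto_ennrealI tendsto_mult_right_zero)
  from tendsto_add[OF tendsto_const this]
  show "(\<lambda>k. sr_norm_p p f + ennreal (?err k)) \<longlonglongrightarrow> sr_norm_p p f" by simp
  have "ennreal (\<integral>x. g x powr p \<partial>lebesgue) \<le> sr_norm_p p f + ennreal (?err k)" for k
  proof -
    have gN': "0 \<le> g x \<and> g x \<le> N" for x using gf gN by auto
    have "0 \<le> ?err k" using p dyadic_L1_error_nonneg[of k g] by simp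
    then have "ennreal (\<integral>x. g x powr p \<partial>lebesgue)
        \<le> ennreal (\<integral>x. dyadic_expectation k g x powr p \<partial>lebesgue) + ennreal (?err k)"
      using integral_powr_le_dyadic_expectation[OF p g gN', of k]
      by (simp add: ennreal_plus[symmetric] integral_nonneg_AE del: ennreal_plus)
    also have "\<dots> \<le> sr_norm_p p f + ennreal (?err k)"
      using integral_dyadic_expectation_powr_le_sr_norm_p[OF p f g gf, of k] by (rule add_right_mono)
    finally show ?thesis .
  qed
  then show "\<exists>K. \<forall>k\<ge>K. ennreal (\<integral>x. g x powr p \<partial>lebesgue) \<le> sr_norm_p p f + ennreal (?err k)"
    by blast
qed

lemma nn_integral_powr_le_sr_norm_p:
  fixes f :: "real^'n::finite \<Rightarrow> real"
  assumes p: "1 < p" and f: "loc_integrable f"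
  shows "(\<integral>\<^sup>+x. ennreal (\<bar>f x\<bar> powr p) \<partial>lebesgue) \<le> sr_norm_p p f"
proof -
  have fm: "f \<in> borel_measurable lebesgue" by (rule loc_integrable_measurable[OF f])
  define g where "g n x = indicator (centred_cube (real n)) x * min \<bar>f x\<bar> (real n)" for n x
  have gf: "0 \<le> g n x \<and> g n x \<le> \<bar>f x\<bar>" and gN: "0 \<le> g n x \<and> g n x \<le> real n" for n x
    by (auto simp: g_def indicator_def)
  have g: "bounded_supported (real n) (g n)" for n
  proof -
    have "g n \<in> borel_measurable lebesgue"
      unfolding g_def using fm fmeasurableD[OF centred_cube_lmeasurable] by measurable
    then show ?thesis using gN unfolding bounded_supported_def by (auto simp: g_def)
  qed
  have g_int: "integrable lebesgue (\<lambda>x. g n x powr p)" for n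
    using p by (intro bounded_supported_integrable[OF bounded_supported_powr[OF g gN]]) simp
  have g_mono: "g n x \<le> g (Suc n) x" for n x
    using centred_cube_mono[of "real n" "real (Suc n)"] by (auto simp: g_def indicator_def)
  have g_sup: "(SUP n. ennreal (g n x powr p)) = ennreal (\<bar>f x\<bar> powr p)" for x
  proof (rule antisym)
    show "(SUP n. ennreal (g n x powr p)) \<le> ennreal (\<bar>f x\<bar> powr p)"
      using gf p by (intro SUP_least ennreal_leI powr_mono2) auto
    obtain n :: nat where n: "max \<bar>f x\<bar> (norm x) \<le> real n" using real_arch_simple by blast
    then have "g n x = \<bar>f x\<bar>" using norm_le_imp_mem_centred_cube[of x "real n"] by (simp add: g_def)
    then show "ennreal (\<bar>f x\<bar> powr p) \<le> (SUP n. ennreal (g n x powr p))"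
      by (metis SUP_upper UNIV_I)
  qed
  have "(\<integral>\<^sup>+x. ennreal (\<bar>f x\<bar> powr p) \<partial>lebesgue) = (SUP n. \<integral>\<^sup>+x. ennreal (g n x powr p) \<partial>lebesgue)"
    unfolding g_sup[symmetric]
  proof (rule nn_integral_monotone_convergence_SUP_AE)
    show "AE x in lebesgue. ennreal (g n x powr p) \<le> ennreal (g (Suc n) x powr p)" for n
      using g_mono gf p by (intro AE_I2 ennreal_leI powr_mono2) auto
  qed (use g_int in auto)
  also have "\<dots> = (SUP n. ennreal (\<integral>x. g n x powr p \<partial>lebesgue))"
    using g_int by (simp add: nn_integral_eq_integral)
  also have "\<dots> \<le> sr_norm_p p f"
    using integral_powr_le_sr_norm_p[OF p f g gf] gN by (intro SUP_least) blast
  finally show ?thesis .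
qed

lemma SR_pp_subset_Lp:
  assumes p: "1 < p"
  shows "SR_pp p \<subseteq> Lp p"
proof
  fix f :: "real^'n::finite \<Rightarrow> real"
  assume "f \<in> SR_pp p"
  then have f: "loc_integrable f" and fin: "sr_norm_p p f < \<infinity>" by (auto simp: SR_pp_def)
  have fm: "f \<in> borel_measurable lebesgue" by (rule loc_integrable_measurable[OF f])
  have "(\<integral>\<^sup>+x. ennreal (norm (\<bar>f x\<bar> powr p)) \<partial>lebesgue) < \<infinity>"
    using nn_integral_powr_le_sr_norm_p[OF p f] fin by simp
  then have "integrable lebesgue (\<lambda>x. \<bar>f x\<bar> powr p)"
    using fm by (intro integrableI_bounded) auto
  then show "f \<in> Lp p" using fm by (simp add: Lp_def)
qed

theorem theorem4p1:
  fixes p :: real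
  assumes "1 < p"
  shows "(SR_pp p :: (real^'n::finite \<Rightarrow> real) set) = Lp p"
  using SR_pp_subset_Lp[OF assms] Lp_subset_SR_pp[OF assms] by (rule antisym)

end
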